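(* Let $r\ge 2$, $d\in\{1,\dots,r-1\}$, let $M\in\mathrm{rep}(K_r)$ and $\mathfrak v\in\mathrm{Gr}_d(A_r)$. The following statements are equivalent: (1) $\mathrm{Hom}_{K_r}(E(\mathfrak v),M)=(0)$. (2) For every injective linear map $\alpha:A_d\to A_r$ with $\mathrm{im}\,\alpha=\mathfrak v$, the map $\psi_{\alpha^*(M)}:A_d\otimes_k M_1\to M_2$ is injective. (3) There is an injective linear map $\alpha:A_d\to A_r$ with $\mathrm{im}\,\alpha=\mathfrak v$ such that $\psi_{\alpha^*(M)}$ is injective. (4) There is an injective linear map $\alpha:A_d\to A_r$ with $\mathrm{im}\,\alpha=\mathfrak v$ such that $\alpha^*(M)\cong \Delta_M(d)\,P_0(d)\oplus(\dim_k M_1)\,P_1(d)$. (5) $\mathfrak v\notin\mathcal V(K_r,d)_M$.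
   Context: $k$ is an algebraically closed field of arbitrary characteristic; all vector spaces are finite-dimensional. For $n\ge1$, $K_n$ is the Kronecker quiver with vertices $1,2$ and $n$ arrows $\gamma_1,\dots,\gamma_n:1\to2$; a representation $M=(M_1,M_2,(M(\gamma_i))_{i})$ consists of vector spaces $M_1,M_2$ and linear maps $M(\gamma_i):M_1\to M_2$; $\mathrm{rep}(K_n)$ is the category of such representations. $A_n=\bigoplus_{i=1}^n k\gamma_i$ is the arrow space and $\psi_M:A_n\otimes_k M_1\to M_2$ is the linear map with $\psi_M(\gamma_i\otimes m)=M(\gamma_i)(m)$. For an injective linear map $\alpha:A_d\to A_r$ and $M\in\mathrm{rep}(K_r)$, the pull-back $\alpha^*(M)\in\mathrm{rep}(K_d)$ has spaces $(M_1,M_2)$ and $\alpha^*(M)(\gamma_j)=\psi_M(\alpha(\gamma_j)\otimes -)$. $\Delta_M(d)=\dim_k M_2-d\dim_k M_1$. $P_0(d)=(0,k)$ is the simple projective representation of $K_d$, and $P_1(d)=(k,A_d)$ with $P_1(d)(\gamma_i)(\lambda)=\lambda\gamma_i$ is the projective cover of the simple representation $(k,0)$. $\mathrm{Gr}_d(A_r)$ is the Grassmannian of $d$-dimensional subspaces of $A_r$. The $d$-th rank variety $\mathcal V(K_r,d)_M$ is the set of $\mathfrak v\in\mathrm{Gr}_d(A_r)$ for which there exists an injective $\alpha:A_d\to A_r$ with $\mathrm{im}\,\alpha=\mathfrak v$ such that $\alpha^*(M)$ is not projective. For $\mathfrak v\in\mathrm{Gr}_d(A_r)$ let $C(\mathfrak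 v)=(k,A_r/\mathfrak v)$ with $C(\mathfrak v)(\gamma_i)(\lambda)=\lambda\gamma_i+\mathfrak v$; let $D_{K_r}$ be the standard duality $D_{K_r}(M)=(M_2^*,M_1^*,(M(\gamma_i)^* )_i)$ and $\tau_{K_r}$ the Auslander–Reiten translation of $\mathrm{rep}(K_r)$. Then $E(\mathfrak v):=D_{K_r}(\tau_{K_r}(C(\mathfrak v)))$. *)

theory Defs
  imports Main "HOL-Library.Function_Algebras" "HOL-Computational_Algebra.Polynomial"
begin

text \<open>The field k is a type of class field; algebraic closedness is an explicit hypothesis.\<close>
definition alg_closed :: "'k::field itself \<Rightarrow> bool" where
  "alg_closed _ \<longleftrightarrow> (\<forall>p :: 'k poly. 0 < degree p \<longrightarrow> (\<exists>x. poly p x = 0))"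

text \<open>All vector spaces are realised as subspaces of a function space 'i => 'k
  with pointwise operations (every finite-dimensional space is of this form).\<close>
definition fscale :: "'k::field \<Rightarrow> ('i \<Rightarrow> 'k) \<Rightarrow> ('i \<Rightarrow> 'k)" where
  "fscale c f = (\<lambda>x. c * f x)"

lemma vector_space_fscale: "vector_space (fscale :: 'k::field \<Rightarrow> ('i \<Rightarrow> 'k) \<Rightarrow> _)"
  by unfold_locales (auto simp: fscale_def fun_eq_iff algebra_simps)

abbreviation fsubspace :: "('i \<Rightarrow> 'k::field) set \<Rightarrow> bool" where
  "fsubspace V \<equiv> module.subspace fscale V"

abbreviation fdim :: "('i \<Rightarrow> 'k::field) set \<Rightarrow> nat" where
  "fdim V \<equiv> vector_space.dim fscale V"

definition fin_dim_subspace :: "('i \<Rightarrow> 'k::field) set \<Rightarrow> bool" where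
  "fin_dim_subspace V \<longleftrightarrow> fsubspace V \<and> (\<exists>B. finite B \<and> B \<subseteq> V \<and> module.span fscale B = V)"

definition lin_on :: "('i \<Rightarrow> 'k::field) set \<Rightarrow> ('j \<Rightarrow> 'k) set \<Rightarrow> (('i \<Rightarrow> 'k) \<Rightarrow> ('j \<Rightarrow> 'k)) \<Rightarrow> bool" where
  "lin_on V W f \<longleftrightarrow> (\<forall>x\<in>V. f x \<in> W) \<and> (\<forall>x\<in>V. \<forall>y\<in>V. f (x + y) = f x + f y)
     \<and> (\<forall>c. \<forall>x\<in>V. f (fscale c x) = fscale c (f x))"

text \<open>Dual space V^* of V, realised extensionally (functionals vanish outside V).\<close>
definition dual_sp :: "('i \<Rightarrow> 'k::field) set \<Rightarrow> ((('i \<Rightarrow> 'k)) \<Rightarrow> 'k) set" where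
  "dual_sp V = {\<phi>. lin_on V (UNIV :: (unit \<Rightarrow> 'k) set) (\<lambda>x u. \<phi> x) \<and> (\<forall>x. x \<notin> V \<longrightarrow> \<phi> x = 0)}"

definition arrsp :: "nat \<Rightarrow> (nat \<Rightarrow> 'k::field) set" where
  "arrsp n = {a. \<forall>j\<ge>n. a j = 0}"

definition gam :: "nat \<Rightarrow> (nat \<Rightarrow> 'k::field)" where
  "gam i = (\<lambda>j. if j = i then 1 else 0)"

definition Gr :: "nat \<Rightarrow> nat \<Rightarrow> (nat \<Rightarrow> 'k::field) set set" where
  "Gr d r = {v. fsubspace v \<and> v \<subseteq> arrsp r \<and> fdim v = d}"

definition inj_arr :: "nat \<Rightarrow> nat \<Rightarrow> ((nat \<Rightarrow> 'k::field) \<Rightarrow> (nat \<Rightarrow> 'k)) \<Rightarrow> bool" where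
  "inj_arr d r \<alpha> \<longleftrightarrow> lin_on (arrsp d) (arrsp r) \<alpha> \<and> inj_on \<alpha> (arrsp d)"

text \<open>A representation: spaces M_1, M_2 and maps M(gamma_i) for the arrows i < n
  (arrows indexed 0, ..., n-1).\<close>
record ('i, 'j, 'k) krep =
  sp1 :: "('i \<Rightarrow> 'k) set"
  sp2 :: "('j \<Rightarrow> 'k) set"
  arr :: "nat \<Rightarrow> ('i \<Rightarrow> 'k) \<Rightarrow> ('j \<Rightarrow> 'k)"

definition is_rep :: "nat \<Rightarrow> ('i, 'j, 'k::field) krep \<Rightarrow> bool" where
  "is_rep n M \<longleftrightarrow> fin_dim_subspace (sp1 M) \<and> fin_dim_subspace (sp2 M)
     \<and> (\<forall>i<n. lin_on (sp1 M) (sp2 M) (arr M i))"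

definition is_hom :: "nat \<Rightarrow> ('i, 'j, 'k::field) krep \<Rightarrow> ('i2, 'j2, 'k) krep
     \<Rightarrow> (('i \<Rightarrow> 'k) \<Rightarrow> ('i2 \<Rightarrow> 'k)) \<Rightarrow> (('j \<Rightarrow> 'k) \<Rightarrow> ('j2 \<Rightarrow> 'k)) \<Rightarrow> bool" where
  "is_hom n M N f1 f2 \<longleftrightarrow> lin_on (sp1 M) (sp1 N) f1 \<and> lin_on (sp2 M) (sp2 N) f2
     \<and> (\<forall>i<n. \<forall>x\<in>sp1 M. f2 (arr M i x) = arr N i (f1 x))"

definition hom_zero :: "nat \<Rightarrow> ('i, 'j, 'k::field) krep \<Rightarrow> ('i2, 'j2, 'k) krep \<Rightarrow> bool" where
  "hom_zero n M N \<longleftrightarrow> (\<forall>f1 f2. is_hom n M N f1 f2 \<longrightarrow>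
      (\<forall>x\<in>sp1 M. f1 x = 0) \<and> (\<forall>y\<in>sp2 M. f2 y = 0))"

definition is_iso :: "nat \<Rightarrow> ('i, 'j, 'k::field) krep \<Rightarrow> ('i2, 'j2, 'k) krep \<Rightarrow> bool" where
  "is_iso n M N \<longleftrightarrow> (\<exists>f1 f2. is_hom n M N f1 f2 \<and> bij_betw f1 (sp1 M) (sp1 N)
      \<and> bij_betw f2 (sp2 M) (sp2 N))"

text \<open>Test objects range over representations
  with nat-indexed coordinate spaces, which up to isomorphism are all objects.\<close>
definition projective_rep :: "nat \<Rightarrow> ('i, 'j, 'k::field) krep \<Rightarrow> bool" where
  "projective_rep n P \<longleftrightarrow> (\<forall>(X :: (nat, nat, 'k) krep) (Y :: (nat, nat, 'k) krep) g1 g2 h1 h2.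
      is_rep n X \<and> is_rep n Y \<and> is_hom n X Y g1 g2 \<and> g1 ` sp1 X = sp1 Y \<and> g2 ` sp2 X = sp2 Y
      \<and> is_hom n P Y h1 h2 \<longrightarrow>
      (\<exists>f1 f2. is_hom n P X f1 f2 \<and> (\<forall>x\<in>sp1 P. g1 (f1 x) = h1 x) \<and> (\<forall>y\<in>sp2 P. g2 (f2 y) = h2 y)))"

definition dsum :: "('i1, 'j1, 'k::field) krep \<Rightarrow> ('i2, 'j2, 'k) krep \<Rightarrow> ('i1 + 'i2, 'j1 + 'j2, 'k) krep" where
  "dsum M N = \<lparr> sp1 = {f. (f \<circ> Inl) \<in> sp1 M \<and> (f \<circ> Inr) \<in> sp1 N},
                sp2 = {g. (g \<circ> Inl) \<in> sp2 M \<and> (g \<circ> Inr) \<in> sp2 N},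
                arr = (\<lambda>i f z. case z of Inl x \<Rightarrow> arr M i (f \<circ> Inl) x | Inr y \<Rightarrow> arr N i (f \<circ> Inr) y) \<rparr>"

definition mult_rep :: "nat \<Rightarrow> ('i, 'j, 'k::field) krep \<Rightarrow> (nat \<times> 'i, nat \<times> 'j, 'k) krep" where
  "mult_rep m M = \<lparr> sp1 = {f. \<forall>l. (if l < m then (\<lambda>x. f (l, x)) \<in> sp1 M else (\<lambda>x. f (l, x)) = 0)},
                   sp2 = {g. \<forall>l. (if l < m then (\<lambda>y. g (l, y)) \<in> sp2 M else (\<lambda>y. g (l, y)) = 0)},
                   arr = (\<lambda>i f (l, y). if l < m then arr M i (\<lambda>x. f (l, x)) y else 0) \<rparr>"

definition P0 :: "(unit, unit, 'k::field) krep" where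
  "P0 = \<lparr> sp1 = {0}, sp2 = UNIV, arr = (\<lambda>i x. 0) \<rparr>"

definition P1 :: "nat \<Rightarrow> (unit, nat, 'k::field) krep" where
  "P1 d = \<lparr> sp1 = UNIV, sp2 = arrsp d, arr = (\<lambda>i x. fscale (x ()) (gam i)) \<rparr>"

text \<open>A_n (x) M_1 is identified with M_1^n via the basis gamma_0..gamma_(n-1):
  the tuple (m_j)_j corresponds to sum_j gamma_j (x) m_j; psi_M sends it to sum_j M(gamma_j) m_j.\<close>
definition tensor_sp :: "nat \<Rightarrow> ('i \<Rightarrow> 'k::field) set \<Rightarrow> (nat \<times> 'i \<Rightarrow> 'k) set" where
  "tensor_sp n V = {f. \<forall>l. (if l < n then (\<lambda>x. f (l, x)) \<in> V else (\<lambda>x. f (l, x)) = 0)}"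

definition psi :: "nat \<Rightarrow> ('i, 'j, 'k::field) krep \<Rightarrow> (nat \<times> 'i \<Rightarrow> 'k) \<Rightarrow> ('j \<Rightarrow> 'k)" where
  "psi n M f = (\<Sum>l<n. arr M l (\<lambda>x. f (l, x)))"

definition psi_injective :: "nat \<Rightarrow> ('i, 'j, 'k::field) krep \<Rightarrow> bool" where
  "psi_injective n M \<longleftrightarrow> inj_on (psi n M) (tensor_sp n (sp1 M))"

text \<open>Pull-back alpha^*(M) in rep(K_d): alpha^*(M)(gamma_j) = psi_M(alpha(gamma_j) (x) -),
  i.e. sum_i alpha(gamma_j)_i M(gamma_i).\<close>
definition pullback :: "nat \<Rightarrow> ((nat \<Rightarrow> 'k::field) \<Rightarrow> (nat \<Rightarrow> 'k)) \<Rightarrow> ('i, 'j, 'k) krep \<Rightarrow> ('i, 'j, 'k) krep" where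
  "pullback r \<alpha> M = \<lparr> sp1 = sp1 M, sp2 = sp2 M,
      arr = (\<lambda>j m. \<Sum>i<r. fscale (\<alpha> (gam j) i) (arr M i m)) \<rparr>"

definition Delta :: "('i, 'j, 'k::field) krep \<Rightarrow> nat \<Rightarrow> int" where
  "Delta M d = int (fdim (sp2 M)) - int d * int (fdim (sp1 M))"

definition rank_variety :: "nat \<Rightarrow> nat \<Rightarrow> ('i, 'j, 'k::field) krep \<Rightarrow> (nat \<Rightarrow> 'k) set set" where
  "rank_variety r d M = {v \<in> Gr d r. \<exists>\<alpha>. inj_arr d r \<alpha> \<and> \<alpha> ` arrsp d = v
      \<and> \<not> projective_rep d (pullback r \<alpha> M)}"

text \<open>The quotient A_r / v is realised via its canonical isomorphism with the dual of the
  annihilator of v: the coset a + v corresponds to (phi |-> phi(a)) on ann(v).\<close>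
definition annih :: "nat \<Rightarrow> (nat \<Rightarrow> 'k::field) set \<Rightarrow> ((nat \<Rightarrow> 'k) \<Rightarrow> 'k) set" where
  "annih r v = {\<phi> \<in> dual_sp (arrsp r). \<forall>x\<in>v. \<phi> x = 0}"

definition quot_proj :: "nat \<Rightarrow> (nat \<Rightarrow> 'k::field) set \<Rightarrow> (nat \<Rightarrow> 'k) \<Rightarrow> (((nat \<Rightarrow> 'k) \<Rightarrow> 'k) \<Rightarrow> 'k)" where
  "quot_proj r v a = (\<lambda>\<phi>. if \<phi> \<in> annih r v then \<phi> a else 0)"

definition Crep :: "nat \<Rightarrow> (nat \<Rightarrow> 'k::field) set \<Rightarrow> (unit, (nat \<Rightarrow> 'k) \<Rightarrow> 'k, 'k) krep" where
  "Crep r v = \<lparr> sp1 = UNIV, sp2 = quot_proj r v ` arrsp r,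
      arr = (\<lambda>i x. quot_proj r v (fscale (x ()) (gam i))) \<rparr>"

definition Dual :: "('i, 'j, 'k::field) krep \<Rightarrow> ('j \<Rightarrow> 'k, 'i \<Rightarrow> 'k, 'k) krep" where
  "Dual M = \<lparr> sp1 = dual_sp (sp2 M), sp2 = dual_sp (sp1 M),
      arr = (\<lambda>i \<phi> x. if x \<in> sp1 M then \<phi> (arr M i x) else 0) \<rparr>"

text \<open>Shift functor sigma_{K_r} (BGP reflection at the sink followed by relabelling):
  sigma(M) = (ker psi_M, M_1), sigma(M)(gamma_i)(sum_j gamma_j (x) m_j) = m_i.\<close>
definition shift :: "nat \<Rightarrow> ('i, 'j, 'k::field) krep \<Rightarrow> (nat \<times> 'i, 'i, 'k) krep" where
  "shift r M = \<lparr> sp1 = {f \<in> tensor_sp r (sp1 M). psi r M f = 0}, sp2 = sp1 M,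
      arr = (\<lambda>i f x. f (i, x)) \<rparr>"

text \<open>Auslander-Reiten translation of rep(K_r), given by the Coxeter functor tau = sigma^2.\<close>
definition tau :: "nat \<Rightarrow> ('i, 'j, 'k::field) krep \<Rightarrow> (nat \<times> (nat \<times> 'i), nat \<times> 'i, 'k) krep" where
  "tau r M = shift r (shift r M)"

definition Erep :: "nat \<Rightarrow> (nat \<Rightarrow> 'k::field) set
     \<Rightarrow> (nat \<times> unit \<Rightarrow> 'k, nat \<times> (nat \<times> unit) \<Rightarrow> 'k, 'k) krep" where
  "Erep r v = Dual (tau r (Crep r v))"

end

theory Submission
  imports Defs
begin

text \<open>
  For a representation \<open>N\<close> of \<open>K\<^sub>d\<close>, injectivity of \<open>\<psi>\<^sub>N\<close>, projectivity of \<open>N\<close> and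
  \<open>N \<cong> a P\<^sub>0(d) \<oplus> n P\<^sub>1(d)\<close> are equivalent. If \<open>\<psi>\<^sub>N\<close> is injective, the vectors \<open>N(\<gamma>\<^sub>i)(m\<^sub>k)\<close>
  for a basis \<open>(m\<^sub>k)\<close> of \<open>N\<^sub>1\<close> are independent and extend to a basis of \<open>N\<^sub>2\<close>, so \<open>N\<close> is free
  on generators; conversely, lifting a functional on \<open>N\<^sub>1\<close> through \<open>P\<^sub>1(d) \<rightarrow> (k, 0)\<close> shows that
  a projective \<open>N\<close> has injective \<open>\<psi>\<^sub>N\<close>. Applied to \<open>N = \<alpha>\<^sup>*(M)\<close> this relates (2) to (5).

  For (1): \<open>\<tau>C(v) = (K, V)\<close>, where \<open>V \<cong> v\<close> is the kernel of \<open>\<psi>\<^bsub>C(v)\<^esub>\<close> and \<open>K\<close> is the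
  kernel of the diagonal sum \<open>V\<^sup>r \<rightarrow> k\<close>, so \<open>E(v) = (V\<^sup>*, K\<^sup>*)\<close>. A morphism \<open>f : E(v) \<rightarrow> M\<close>
  is determined by the vectors \<open>t\<^sub>j = f\<^sub>1(\<delta>\<^sub>j)\<close>, where \<open>(\<delta>\<^sub>j)\<close> is dual to the basis
  \<open>(\<alpha>(\<gamma>\<^sub>j))\<close> of \<open>V\<close>, and the relation \<open>\<Sum>\<^sub>i E(\<gamma>\<^sub>i)(ev\<^sub>i) = 0\<close> in \<open>E(v)\<close>, with \<open>ev\<^sub>i\<close> the
  \<open>i\<close>-th coordinate on \<open>V\<close>, says exactly that \<open>\<psi>\<^bsub>\<alpha>\<^sup>*(M)\<^esub>(t) = 0\<close>; conversely every \<open>t\<close> in this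
  kernel defines a morphism. Hence \<open>Hom(E(v), M) = 0\<close> iff \<open>\<psi>\<^bsub>\<alpha>\<^sup>*(M)\<^esub>\<close> is injective, for each \<open>\<alpha>\<close>.
\<close>

section \<open>Linear algebra in function spaces\<close>

interpretation FS: vector_space "fscale :: 'k::field \<Rightarrow> ('i \<Rightarrow> 'k) \<Rightarrow> ('i \<Rightarrow> 'k)"
  by (rule vector_space_fscale)

lemma sum_fun_apply: "(sum f A) x = (\<Sum>a\<in>A. f a x)"
  by (induction A rule: infinite_finite_induct) auto

lemma fscale_apply [simp]: "fscale c f x = c * f x"
  by (simp add: fscale_def)

lemma fscale_zero_left [simp]: "fscale 0 f = 0"
  and fscale_zero_right [simp]: "fscale c 0 = 0"
  and fscale_one [simp]: "fscale 1 f = f"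
  by (auto simp: fscale_def fun_eq_iff)

definition lincomb :: "'z set \<Rightarrow> ('z \<Rightarrow> 'k::field) \<Rightarrow> ('z \<Rightarrow> 'i \<Rightarrow> 'k) \<Rightarrow> 'i \<Rightarrow> 'k" where
  "lincomb I c e = (\<Sum>z\<in>I. fscale (c z) (e z))"

definition indep_family :: "'z set \<Rightarrow> ('z \<Rightarrow> 'i \<Rightarrow> 'k::field) \<Rightarrow> bool" where
  "indep_family I e \<longleftrightarrow> (\<forall>c. lincomb I c e = 0 \<longrightarrow> (\<forall>z\<in>I. c z = 0))"

definition basis_family :: "('i \<Rightarrow> 'k::field) set \<Rightarrow> 'z set \<Rightarrow> ('z \<Rightarrow> 'i \<Rightarrow> 'k) \<Rightarrow> bool" where
  "basis_family V I e \<longleftrightarrow>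
     finite I \<and> e ` I \<subseteq> V \<and> (\<forall>x\<in>V. \<exists>c. x = lincomb I c e) \<and> indep_family I e"

lemma lincomb_cong:
  "I = J \<Longrightarrow> (\<And>z. z \<in> J \<Longrightarrow> c z = c' z) \<Longrightarrow> (\<And>z. z \<in> J \<Longrightarrow> e z = e' z) \<Longrightarrow>
    lincomb I c e = lincomb J c' e'"
  unfolding lincomb_def by (rule sum.cong) auto

lemma lincomb_add: "lincomb I (\<lambda>z. c z + c' z) e = lincomb I c e + lincomb I c' e"
  unfolding lincomb_def by (simp add: FS.scale_left_distrib sum.distrib)

lemma lincomb_diff: "lincomb I (\<lambda>z. c z - c' z) e = lincomb I c e - lincomb I c' e"
  unfolding lincomb_def by (simp add: FS.scale_left_diff_distrib sum_subtractf)

lemma lincomb_scale: "lincomb I (\<lambda>z. a * c z) e = fscale a (lincomb I c e)"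
  unfolding lincomb_def by (simp add: FS.scale_sum_right)

lemma lincomb_in_subspace: "fsubspace W \<Longrightarrow> e ` I \<subseteq> W \<Longrightarrow> lincomb I c e \<in> W"
  unfolding lincomb_def by (intro FS.subspace_sum FS.subspace_scale) auto

lemma lincomb_indicator:
  assumes "finite I" "z0 \<in> I"
  shows "lincomb I (\<lambda>z. if z = z0 then 1 else 0) e = e z0"
proof -
  have "lincomb I (\<lambda>z. if z = z0 then 1 else 0) e = (\<Sum>z\<in>I. if z = z0 then e z else 0)"
    unfolding lincomb_def by (rule sum.cong) auto
  then show ?thesis using assms by simp
qed

lemma lincomb_Inl_Inr:
  assumes "finite A" "finite B"
  shows "lincomb (Inl ` A \<union> Inr ` B) c e =
    (\<Sum>s\<in>A. fscale (c (Inl s)) (e (Inl s))) + (\<Sum>p\<in>B. fscale (c (Inr p)) (e (Inr p)))"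
  unfolding lincomb_def using assms by (subst sum.union_disjoint) (auto simp: sum.reindex)

lemma indep_family_coeffs_eq:
  assumes "indep_family I e" "lincomb I c e = lincomb I c' e" "z \<in> I"
  shows "c z = c' z"
proof -
  have "lincomb I (\<lambda>z. c z - c' z) e = 0" using assms(2) by (simp add: lincomb_diff)
  then show ?thesis using assms(1,3) unfolding indep_family_def by force
qed

lemma lin_on_mem: "lin_on V W f \<Longrightarrow> x \<in> V \<Longrightarrow> f x \<in> W"
  and lin_on_add: "lin_on V W f \<Longrightarrow> x \<in> V \<Longrightarrow> y \<in> V \<Longrightarrow> f (x + y) = f x + f y"
  and lin_on_scale: "lin_on V W f \<Longrightarrow> x \<in> V \<Longrightarrow> f (fscale c x) = fscale c (f x)"
  unfolding lin_on_def by blast+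

lemma lin_on_zero:
  assumes "lin_on V W f" "fsubspace V"
  shows "f 0 = 0"
  using lin_on_add[OF assms(1) FS.subspace_0[OF assms(2)] FS.subspace_0[OF assms(2)]] by simp

lemma lin_on_diff:
  assumes "lin_on V W f" "fsubspace V" "x \<in> V" "y \<in> V"
  shows "f (x - y) = f x - f y"
proof -
  have "x - y \<in> V" using assms(2-4) by (rule FS.subspace_diff)
  then have "f (x - y + y) = f (x - y) + f y" using lin_on_add[OF assms(1) _ assms(4)] by blast
  then show ?thesis by (simp only: diff_add_cancel eq_diff_eq)
qed

lemma lin_on_sum:
  assumes "lin_on V W f" "fsubspace V" "\<And>z. z \<in> I \<Longrightarrow> x z \<in> V"
  shows "f (\<Sum>z\<in>I. x z) = (\<Sum>z\<in>I. f (x z))"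
  using assms(3)
proof (induction I rule: infinite_finite_induct)
  case (insert a A)
  have "(\<Sum>z\<in>A. x z) \<in> V" using insert.prems by (intro FS.subspace_sum[OF assms(2)]) auto
  then have "f (x a + (\<Sum>z\<in>A. x z)) = f (x a) + f (\<Sum>z\<in>A. x z)"
    using insert.prems lin_on_add[OF assms(1)] by blast
  also have "\<dots> = f (x a) + (\<Sum>z\<in>A. f (x z))" using insert.IH insert.prems by simp
  finally show ?case by (simp only: sum.insert[OF insert.hyps])
qed (use lin_on_zero[OF assms(1,2)] in simp_all)

lemma lin_on_lincomb:
  assumes "lin_on V W f" "fsubspace V" "e ` I \<subseteq> V"
  shows "f (lincomb I c e) = lincomb I c (\<lambda>z. f (e z))"
  unfolding lincomb_def using assms
  by (subst lin_on_sum[OF assms(1,2)]) (auto intro!: sum.cong FS.subspace_scale lin_on_scale)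

lemma lin_on_comp: "lin_on U V f \<Longrightarrow> lin_on V W g \<Longrightarrow> lin_on U W (g \<circ> f)"
  unfolding lin_on_def by auto

lemma lin_on_inj_on_iff:
  assumes "lin_on V W f" "fsubspace V"
  shows "inj_on f V \<longleftrightarrow> (\<forall>x\<in>V. f x = 0 \<longrightarrow> x = 0)"
proof
  assume "inj_on f V"
  then show "\<forall>x\<in>V. f x = 0 \<longrightarrow> x = 0"
    using lin_on_zero[OF assms] FS.subspace_0[OF assms(2)] by (metis inj_onD)
next
  assume ker: "\<forall>x\<in>V. f x = 0 \<longrightarrow> x = 0"
  show "inj_on f V"
  proof (rule inj_onI)
    fix x y assume "x \<in> V" "y \<in> V" "f x = f y"
    then have "f (x - y) = 0" "x - y \<in> V"
      using lin_on_diff[OF assms] FS.subspace_diff[OF assms(2)] by simp_all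
    then show "x = y" using ker by (metis right_minus_eq)
  qed
qed

lemma lin_on_inv_into:
  assumes f: "lin_on A B f" "bij_betw f A B" and A: "fsubspace A"
  shows "lin_on B A (inv_into A f)"
proof -
  let ?g = "inv_into A f"
  have g: "?g y \<in> A" "f (?g y) = y" if "y \<in> B" for y
    using that f(2) by (auto simp: bij_betw_def inv_into_into f_inv_into_f)
  have g_eqI: "?g y = x" if "x \<in> A" "f x = y" for x y
    using that f(2) by (auto simp: bij_betw_inv_into_left)
  show ?thesis
    unfolding lin_on_def
  proof (intro conjI ballI allI)
    fix x y assume "x \<in> B" "y \<in> B"
    then show "?g (x + y) = ?g x + ?g y"
      using g lin_on_add[OF f(1)] FS.subspace_add[OF A] by (intro g_eqI) simp_all
  next
    fix c x assume "x \<in> B"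
    then show "?g (fscale c x) = fscale c (?g x)"
      using g lin_on_scale[OF f(1)] FS.subspace_scale[OF A] by (intro g_eqI) simp_all
  qed (use g in blast)
qed

lemma basis_family_lin_on_eq:
  assumes "basis_family V I e" "fsubspace V" "lin_on V W f" "lin_on V W' g"
    "\<And>z. z \<in> I \<Longrightarrow> f (e z) = g (e z)" "x \<in> V"
  shows "f x = g x"
proof -
  obtain c where c: "x = lincomb I c e" using assms(1,6) unfolding basis_family_def by blast
  have eI: "e ` I \<subseteq> V" using assms(1) unfolding basis_family_def by blast
  have "f x = lincomb I c (\<lambda>z. f (e z))" using c lin_on_lincomb[OF assms(3,2) eI] by simp
  also have "\<dots> = lincomb I c (\<lambda>z. g (e z))" using assms(5) by (simp add: lincomb_def)
  also have "\<dots> = g x" using c lin_on_lincomb[OF assms(4,2) eI] by simp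
  finally show ?thesis .
qed

lemma basis_family_lin_on_exists:
  assumes B: "basis_family V I e" and V: "fsubspace V" and W: "fsubspace W"
    and t: "\<And>z. z \<in> I \<Longrightarrow> t z \<in> W"
  obtains f where "lin_on V W f" "\<And>z. z \<in> I \<Longrightarrow> f (e z) = t z"
proof -
  obtain C where C: "\<And>x. x \<in> V \<Longrightarrow> x = lincomb I (C x) e"
    using B unfolding basis_family_def by metis
  have coeff: "C x z = c z" if "x = lincomb I c e" "x \<in> V" "z \<in> I" for x c z
    using B C that unfolding basis_family_def by (metis indep_family_coeffs_eq)
  define f where "f x = lincomb I (C x) t" for x
  have "lin_on V W f"
    unfolding lin_on_def f_def
  proof (intro conjI ballI allI)
    fix x show "lincomb I (C x) t \<in> W" using t by (intro lincomb_in_subspace[OF W]) auto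
  next
    fix x y assume xy: "x \<in> V" "y \<in> V"
    have "x + y = lincomb I (\<lambda>z. C x z + C y z) e"
      using C[OF xy(1)] C[OF xy(2)] by (simp add: lincomb_add)
    then have "C (x + y) z = C x z + C y z" if "z \<in> I" for z
      using coeff FS.subspace_add[OF V xy] that by blast
    then show "lincomb I (C (x + y)) t = lincomb I (C x) t + lincomb I (C y) t"
      by (simp add: lincomb_add cong: lincomb_cong)
  next
    fix a x assume x: "x \<in> V"
    have "fscale a x = lincomb I (\<lambda>z. a * C x z) e"
      using C[OF x] by (simp add: lincomb_scale)
    then have "C (fscale a x) z = a * C x z" if "z \<in> I" for z
      using coeff FS.subspace_scale[OF V x] that by blast
    then show "lincomb I (C (fscale a x)) t = fscale a (lincomb I (C x) t)"
      by (simp add: lincomb_scale cong: lincomb_cong)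
  qed
  moreover have "f (e z) = t z" if z: "z \<in> I" for z
  proof -
    have fin: "finite I" and ez: "e z \<in> V" using B z unfolding basis_family_def by auto
    have "C (e z) z' = (if z' = z then 1 else 0)" if "z' \<in> I" for z'
      using coeff[OF lincomb_indicator[OF fin z, symmetric] ez that] .
    then show ?thesis unfolding f_def by (simp add: lincomb_indicator[OF fin z] cong: lincomb_cong)
  qed
  ultimately show ?thesis using that by blast
qed

lemma basis_family_coord_functional:
  assumes "basis_family V I e" "fsubspace V" "z0 \<in> I"
  obtains \<phi> where "lin_on V (UNIV :: (unit \<Rightarrow> 'k::field) set) \<phi>"
    "\<And>c. \<phi> (lincomb I c e) () = c z0"
proof -
  let ?t = "\<lambda>z (_::unit). if z = z0 then 1 else (0::'k)"
  obtain \<phi> where \<phi>: "lin_on V UNIV \<phi>" "\<And>z. z \<in> I \<Longrightarrow> \<phi> (e z) = ?t z"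
    using basis_family_lin_on_exists[OF assms(1,2), of UNIV ?t] by auto
  have fin: "finite I" and eI: "e ` I \<subseteq> V" using assms(1) unfolding basis_family_def by auto
  have "\<phi> (lincomb I c e) () = c z0" for c
  proof -
    have "\<phi> (lincomb I c e) = lincomb I c ?t"
      unfolding lin_on_lincomb[OF \<phi>(1) assms(2) eI] using \<phi>(2) by (intro lincomb_cong) simp_all
    then have "\<phi> (lincomb I c e) () = (\<Sum>z\<in>I. c z * (if z = z0 then 1 else 0))"
      unfolding lincomb_def by (simp add: sum_fun_apply)
    also have "\<dots> = c z0" using fin assms(3) by (simp add: if_distrib cong: if_cong)
    finally show ?thesis .
  qed
  with \<phi>(1) that show ?thesis by blast
qed

lemma basis_family_nonzero_functional:
  assumes "basis_family V I e" "fsubspace V" "x \<in> V" "x \<noteq> 0"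
  obtains \<phi> where "lin_on V (UNIV :: (unit \<Rightarrow> 'k::field) set) \<phi>" "\<phi> x () \<noteq> 0"
proof -
  obtain c where c: "x = lincomb I c e" using assms unfolding basis_family_def by blast
  have "\<exists>z\<in>I. c z \<noteq> 0"
  proof (rule ccontr)
    assume "\<not> (\<exists>z\<in>I. c z \<noteq> 0)"
    then have "x = lincomb I (\<lambda>_. 0) e" using c by (simp cong: lincomb_cong)
    then show False using assms(4) by (simp add: lincomb_def)
  qed
  then obtain z where "z \<in> I" "c z \<noteq> 0" by blast
  with basis_family_coord_functional[OF assms(1,2) this(1)] c that show ?thesis by metis
qed

lemma basis_family_bij_coeffs:
  assumes "basis_family V I e" "fsubspace V"
  shows "bij_betw (\<lambda>c. lincomb I c e) {c. \<forall>z. z \<notin> I \<longrightarrow> c z = 0} V"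
  unfolding bij_betw_def
proof
  have ind: "indep_family I e" and eI: "e ` I \<subseteq> V"
    using assms unfolding basis_family_def by auto
  show "inj_on (\<lambda>c. lincomb I c e) {c. \<forall>z. z \<notin> I \<longrightarrow> c z = 0}"
  proof (rule inj_onI, rule ext)
    fix c c' z assume c: "c \<in> {c. \<forall>z. z \<notin> I \<longrightarrow> c z = 0}" "c' \<in> {c. \<forall>z. z \<notin> I \<longrightarrow> c z = 0}"
      and eq: "lincomb I c e = lincomb I c' e"
    show "c z = c' z"
      using c indep_family_coeffs_eq[OF ind eq, of z] by (cases "z \<in> I") auto
  qed
  have "V \<subseteq> (\<lambda>c. lincomb I c e) ` {c. \<forall>z. z \<notin> I \<longrightarrow> c z = 0}"
  proof
    fix x assume "x \<in> V"
    then obtain c where "x = lincomb I c e" using assms unfolding basis_family_def by blast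
    then have "x = lincomb I (\<lambda>z. if z \<in> I then c z else 0) e" by (simp cong: lincomb_cong)
    then show "x \<in> (\<lambda>c. lincomb I c e) ` {c. \<forall>z. z \<notin> I \<longrightarrow> c z = 0}" by force
  qed
  then show "(\<lambda>c. lincomb I c e) ` {c. \<forall>z. z \<notin> I \<longrightarrow> c z = 0} = V"
    using lincomb_in_subspace[OF assms(2) eI] by blast
qed

lemma indep_family_inj_on:
  assumes "indep_family I e" "finite I"
  shows "inj_on e I"
proof (rule inj_onI, rule ccontr)
  fix z1 z2 assume z: "z1 \<in> I" "z2 \<in> I" "e z1 = e z2" and ne: "z1 \<noteq> z2"
  let ?c = "\<lambda>z. if z = z1 then 1 else 0" and ?c' = "\<lambda>z. if z = z2 then 1 else 0"
  have "lincomb I ?c e = lincomb I ?c' e"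
    unfolding lincomb_indicator[OF assms(2) z(1)] lincomb_indicator[OF assms(2) z(2)] by (rule z(3))
  from indep_family_coeffs_eq[OF assms(1) this z(1)] show False using ne by simp
qed

lemma indep_family_imp_independent:
  assumes "indep_family I e" "finite I"
  shows "FS.independent (e ` I)"
proof
  assume "FS.dependent (e ` I)"
  then obtain u where u: "\<exists>v\<in>e ` I. u v \<noteq> 0" "(\<Sum>v\<in>e ` I. fscale (u v) v) = 0"
    using FS.dependent_finite[of "e ` I"] assms(2) by blast
  have "lincomb I (u \<circ> e) e = (\<Sum>v\<in>e ` I. fscale (u v) v)"
    unfolding lincomb_def by (simp add: sum.reindex[OF indep_family_inj_on[OF assms]])
  with u(2) have "lincomb I (u \<circ> e) e = 0" by simp
  with assms(1) have "\<forall>z\<in>I. (u \<circ> e) z = 0" unfolding indep_family_def by blast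
  then show False using u(1) by auto
qed

lemma basis_family_of_set:
  assumes "finite B" "FS.independent B" "V \<subseteq> FS.span B" "B \<subseteq> V" "bij_betw h I B"
  shows "basis_family V I h"
proof -
  have lincomb_B: "lincomb I c h = (\<Sum>v\<in>B. fscale (c (inv_into I h v)) v)" for c
  proof -
    have "(\<Sum>v\<in>B. fscale (c (inv_into I h v)) v) = (\<Sum>i\<in>I. fscale (c (inv_into I h (h i))) (h i))"
      by (rule sum.reindex_bij_betw[OF assms(5), symmetric])
    also have "\<dots> = lincomb I c h"
      unfolding lincomb_def using assms(5) by (intro sum.cong refl) (simp add: bij_betw_inv_into_left)
    finally show ?thesis by simp
  qed
  have span: "\<exists>c. x = lincomb I c h" if "x \<in> V" for x
  proof -
    have "x \<in> range (\<lambda>u. \<Sum>v\<in>B. fscale (u v) v)"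
      using that assms(3) FS.span_finite[OF assms(1)] by blast
    then obtain u where u: "x = (\<Sum>v\<in>B. fscale (u v) v)" by blast
    have "lincomb I (u \<circ> h) h = x"
      unfolding lincomb_B u using assms(5) by (intro sum.cong refl) (simp add: bij_betw_inv_into_right)
    then show ?thesis by (intro exI[of _ "u \<circ> h"]) (rule sym)
  qed
  have indep: "indep_family I h"
    unfolding indep_family_def
  proof (intro allI impI ballI)
    fix c i assume c: "lincomb I c h = 0" and i: "i \<in> I"
    have "\<forall>v\<in>B. c (inv_into I h v) = 0"
    proof (rule ccontr)
      assume "\<not> (\<forall>v\<in>B. c (inv_into I h v) = 0)"
      moreover have "(\<Sum>v\<in>B. fscale (c (inv_into I h v)) v) = 0" using c unfolding lincomb_B .
      ultimately have "\<exists>u. (\<exists>v\<in>B. u v \<noteq> 0) \<and> (\<Sum>v\<in>B. fscale (u v) v) = 0"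
        by (intro exI[of _ "\<lambda>v. c (inv_into I h v)"]) blast
      then have "FS.dependent B" by (subst FS.dependent_finite[OF assms(1)])
      then show False using assms(2) by blast
    qed
    moreover have "h i \<in> B" using i assms(5) unfolding bij_betw_def by blast
    ultimately have "c (inv_into I h (h i)) = 0" by blast
    then show "c i = 0" using bij_betw_inv_into_left[OF assms(5) i] by simp
  qed
  have "finite I" using bij_betw_finite[OF assms(5)] assms(1) by simp
  moreover have "h ` I \<subseteq> V" using bij_betw_imp_surj_on[OF assms(5)] assms(4) by simp
  ultimately show ?thesis unfolding basis_family_def using span indep by (intro conjI ballI)
qed

lemma basis_family_exists:
  assumes "fsubspace V" "finite B0" "V \<subseteq> FS.span B0"
  obtains u where "basis_family V {..<fdim V} u"
proof -
  obtain B where B: "B \<subseteq> V" "FS.independent B" "V \<subseteq> FS.span B"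
    using FS.maximal_independent_subset by blast
  have "B \<subseteq> FS.span B0" using B(1) assms(3) by blast
  then have finB: "finite B" using FS.independent_span_bound[OF assms(2) B(2)] by blast
  obtain u where "bij_betw u {0..<card B} B" using ex_bij_betw_nat_finite[OF finB] by blast
  then have "basis_family V {..<card B} u"
    by (intro basis_family_of_set[OF finB B(2,3,1)]) (simp add: atLeast0LessThan)
  then show ?thesis using that FS.basis_card_eq_dim[OF B(1,3,2)] by simp
qed

lemma basis_family_extend:
  assumes V: "fsubspace V" "finite B0" "V \<subseteq> FS.span B0"
    and e: "finite J" "e ` J \<subseteq> V" "indep_family J e"
  obtains a u where "\<forall>s<a. u s \<in> V" "basis_family V (Inl ` {..<a} \<union> Inr ` J) (case_sum u e)"
    "a + card J = fdim V"
proof -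
  have inj: "inj_on e J" by (rule indep_family_inj_on[OF e(3,1)])
  obtain B where B: "e ` J \<subseteq> B" "B \<subseteq> V" "FS.independent B" "V \<subseteq> FS.span B"
    using FS.maximal_independent_subset_extend[OF e(2) indep_family_imp_independent[OF e(3,1)]]
    by blast
  have "B \<subseteq> FS.span B0" using B(2) V(3) by blast
  then have finB: "finite B" using FS.independent_span_bound[OF V(2) B(3)] by blast
  define R where "R = B - e ` J"
  define a where "a = card R"
  obtain u where u: "bij_betw u {..<a} R"
    using ex_bij_betw_nat_finite[of R] finB unfolding R_def a_def by (auto simp: atLeast0LessThan)
  have "bij_betw (case_sum u e) (Inl ` {..<a} \<union> Inr ` J) B"
    unfolding bij_betw_def
  proof
    show "inj_on (case_sum u e) (Inl ` {..<a} \<union> Inr ` J)"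
    proof (rule inj_onI)
      fix x y assume "x \<in> Inl ` {..<a} \<union> Inr ` J" "y \<in> Inl ` {..<a} \<union> Inr ` J"
        and "case_sum u e x = case_sum u e y"
      moreover have "\<And>s. s < a \<Longrightarrow> u s \<in> R" using u unfolding bij_betw_def by blast
      ultimately show "x = y"
        using inj_onD[OF inj] inj_onD[OF bij_betw_imp_inj_on[OF u]]
        unfolding R_def by (auto simp: image_iff; metis)
    qed
    have "case_sum u e ` (Inl ` {..<a} \<union> Inr ` J) = R \<union> e ` J"
      using u by (simp add: image_Un image_image bij_betw_def)
    then show "case_sum u e ` (Inl ` {..<a} \<union> Inr ` J) = B"
      using B(1) unfolding R_def by blast
  qed
  then have "basis_family V (Inl ` {..<a} \<union> Inr ` J) (case_sum u e)"
    by (rule basis_family_of_set[OF finB B(3,4,2)])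
  moreover have "\<forall>s<a. u s \<in> V" using u B(2) unfolding bij_betw_def R_def by blast
  moreover have "a + card J = fdim V"
    using FS.basis_card_eq_dim[OF B(2,4,3)] card_image[OF inj] B(1) finB
    unfolding a_def R_def by (metis card_Diff_subset card_mono finite_subset le_add_diff_inverse2)
  ultimately show ?thesis using that by blast
qed

section \<open>Arrow spaces, tensor spaces and \<open>\<psi>\<close>\<close>

lemma gam_in_arrsp: "j < n \<Longrightarrow> gam j \<in> arrsp n"
  by (simp add: arrsp_def gam_def)

lemma subspace_arrsp: "fsubspace (arrsp n)"
  by (rule FS.subspaceI) (auto simp: arrsp_def)

lemma sum_mult_gam: "(\<Sum>l<n. f l * gam l j) = (if j < n then f j else 0)"
proof -
  have "(\<Sum>l<n. f l * gam l j) = (\<Sum>l<n. if l = j then f l else 0)"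
    by (rule sum.cong) (auto simp: gam_def)
  then show ?thesis by simp
qed

lemma sum_fscale_gam:
  assumes "i < n"
  shows "(\<Sum>j<n. fscale (c * gam i j) (w j)) = fscale c (w i)"
proof -
  have "(\<Sum>j<n. fscale (c * gam i j) (w j)) = (\<Sum>j<n. if j = i then fscale c (w j) else 0)"
    by (rule sum.cong) (auto simp: gam_def)
  then show ?thesis using assms by simp
qed

lemma arrsp_eq_lincomb_gam: "a \<in> arrsp n \<Longrightarrow> a = lincomb {..<n} a gam"
  by (rule ext) (simp add: lincomb_def sum_fun_apply sum_mult_gam arrsp_def)

lemma arrsp_subset_span_gam: "arrsp n \<subseteq> FS.span (gam ` {..<n})"
proof
  fix a assume "a \<in> arrsp n"
  moreover have "lincomb {..<n} a gam \<in> FS.span (gam ` {..<n})"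
    unfolding lincomb_def by (intro FS.span_sum FS.span_scale FS.span_base) auto
  ultimately show "a \<in> FS.span (gam ` {..<n})" using arrsp_eq_lincomb_gam by metis
qed

lemma fin_dim_arrsp: "fin_dim_subspace (arrsp n)"
proof -
  have "gam ` {..<n} \<subseteq> arrsp n" using gam_in_arrsp by blast
  moreover from this have "FS.span (gam ` {..<n}) = arrsp n"
    using FS.span_subspace arrsp_subset_span_gam subspace_arrsp by blast
  ultimately show ?thesis
    unfolding fin_dim_subspace_def using subspace_arrsp by blast
qed

lemma fin_dim_subspace_zero: "fin_dim_subspace {0}"
  unfolding fin_dim_subspace_def by (intro conjI exI[of _ "{}"]) auto

lemma fin_dim_subspace_basis:
  assumes "fin_dim_subspace V"
  obtains u where "basis_family V {..<fdim V} u"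
  using assms basis_family_exists unfolding fin_dim_subspace_def by blast

abbreviation slice :: "(nat \<times> 'a \<Rightarrow> 'k) \<Rightarrow> nat \<Rightarrow> 'a \<Rightarrow> 'k" where
  "slice t l \<equiv> (\<lambda>x. t (l, x))"

lemma mem_tensor_sp_iff:
  "t \<in> tensor_sp n V \<longleftrightarrow> (\<forall>l<n. slice t l \<in> V) \<and> (\<forall>l x. n \<le> l \<longrightarrow> t (l, x) = 0)"
  unfolding tensor_sp_def by (auto simp: fun_eq_iff)

lemma tensor_sp_eq_zeroI:
  assumes "t \<in> tensor_sp n V" "\<And>l. l < n \<Longrightarrow> slice t l = 0"
  shows "t = 0"
proof
  fix p :: "nat \<times> _"
  show "t p = 0 p"
    using assms fun_cong[OF assms(2)] unfolding mem_tensor_sp_iff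
    by (cases p) (metis not_le zero_fun_apply)
qed

lemma subspace_tensor_sp:
  assumes "fsubspace V" shows "fsubspace (tensor_sp n V)"
proof (rule FS.subspaceI)
  show "0 \<in> tensor_sp n V"
    unfolding mem_tensor_sp_iff using FS.subspace_0[OF assms] by (simp add: zero_fun_def)
next
  fix x y assume "x \<in> tensor_sp n V" "y \<in> tensor_sp n V"
  then show "x + y \<in> tensor_sp n V"
    unfolding mem_tensor_sp_iff using FS.subspace_add[OF assms] by (auto simp: plus_fun_def)
next
  fix c x assume "x \<in> tensor_sp n V"
  then show "fscale c x \<in> tensor_sp n V"
    unfolding mem_tensor_sp_iff using FS.subspace_scale[OF assms] by (auto simp: fscale_def)
qed

lemma is_repD:
  assumes "is_rep n M"
  shows "fsubspace (sp1 M)" "fsubspace (sp2 M)" "\<And>i. i < n \<Longrightarrow> lin_on (sp1 M) (sp2 M) (arr M i)"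
  using assms unfolding is_rep_def fin_dim_subspace_def by auto

lemma is_homD:
  assumes "is_hom n M N f1 f2"
  shows "lin_on (sp1 M) (sp1 N) f1" "lin_on (sp2 M) (sp2 N) f2"
    "\<And>i x. i < n \<Longrightarrow> x \<in> sp1 M \<Longrightarrow> f2 (arr M i x) = arr N i (f1 x)"
  using assms unfolding is_hom_def by auto

lemma lin_on_psi:
  assumes "fsubspace (sp1 M)" "fsubspace (sp2 M)" "\<And>i. i < n \<Longrightarrow> lin_on (sp1 M) (sp2 M) (arr M i)"
  shows "lin_on (tensor_sp n (sp1 M)) (sp2 M) (psi n M)"
  unfolding lin_on_def
proof (intro conjI ballI allI)
  fix x assume "x \<in> tensor_sp n (sp1 M)"
  then show "psi n M x \<in> sp2 M" unfolding psi_def mem_tensor_sp_iff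
    by (intro FS.subspace_sum[OF assms(2)]) (auto intro: lin_on_mem[OF assms(3)])
next
  fix x y assume "x \<in> tensor_sp n (sp1 M)" "y \<in> tensor_sp n (sp1 M)"
  then have "arr M l (slice (x + y) l) = arr M l (slice x l) + arr M l (slice y l)" if "l < n" for l
    using lin_on_add[OF assms(3)] that unfolding mem_tensor_sp_iff plus_fun_def by blast
  then show "psi n M (x + y) = psi n M x + psi n M y"
    unfolding psi_def by (simp add: sum.distrib)
next
  fix c x assume "x \<in> tensor_sp n (sp1 M)"
  then have "arr M l (slice (fscale c x) l) = fscale c (arr M l (slice x l))" if "l < n" for l
    using lin_on_scale[OF assms(3)] that unfolding mem_tensor_sp_iff fscale_def by blast
  then show "psi n M (fscale c x) = fscale c (psi n M x)"
    unfolding psi_def by (simp add: FS.scale_sum_right)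
qed

lemma psi_injective_iff:
  assumes "is_rep n M"
  shows "psi_injective n M \<longleftrightarrow> (\<forall>t\<in>tensor_sp n (sp1 M). psi n M t = 0 \<longrightarrow> t = 0)"
  unfolding psi_injective_def
  using lin_on_inj_on_iff[OF lin_on_psi subspace_tensor_sp] is_repD[OF assms] by blast

lemma pullback_simps [simp]:
  "sp1 (pullback r \<alpha> M) = sp1 M" "sp2 (pullback r \<alpha> M) = sp2 M"
  "arr (pullback r \<alpha> M) j = (\<lambda>m. \<Sum>i<r. fscale (\<alpha> (gam j) i) (arr M i m))"
  by (simp_all add: pullback_def)

lemma psi_pullback:
  "psi d (pullback r \<alpha> M) t = (\<Sum>j<d. \<Sum>l<r. fscale (\<alpha> (gam j) l) (arr M l (slice t j)))"
  unfolding psi_def by simp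

lemma is_rep_pullback:
  assumes "is_rep r M"
  shows "is_rep d (pullback r \<alpha> M)"
proof -
  note M = is_repD[OF assms]
  have "lin_on (sp1 M) (sp2 M) (\<lambda>m. \<Sum>i<r. fscale (\<alpha> (gam j) i) (arr M i m))" for j
    unfolding lin_on_def
  proof (intro conjI ballI allI)
    fix x assume "x \<in> sp1 M"
    then show "(\<Sum>i<r. fscale (\<alpha> (gam j) i) (arr M i x)) \<in> sp2 M"
      by (intro FS.subspace_sum[OF M(2)] FS.subspace_scale[OF M(2)]) (auto intro: lin_on_mem[OF M(3)])
  next
    fix x y assume "x \<in> sp1 M" "y \<in> sp1 M"
    then have "arr M i (x + y) = arr M i x + arr M i y" if "i < r" for i
      using M(3)[OF that] lin_on_add by blast
    then show "(\<Sum>i<r. fscale (\<alpha> (gam j) i) (arr M i (x + y))) =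
      (\<Sum>i<r. fscale (\<alpha> (gam j) i) (arr M i x)) + (\<Sum>i<r. fscale (\<alpha> (gam j) i) (arr M i y))"
      by (simp add: FS.scale_right_distrib sum.distrib)
  next
    fix c x assume "x \<in> sp1 M"
    then have "arr M i (fscale c x) = fscale c (arr M i x)" if "i < r" for i
      using M(3)[OF that] lin_on_scale by blast
    then show "(\<Sum>i<r. fscale (\<alpha> (gam j) i) (arr M i (fscale c x))) =
      fscale c (\<Sum>i<r. fscale (\<alpha> (gam j) i) (arr M i x))"
      by (simp add: FS.scale_sum_right mult.commute)
  qed
  then show ?thesis using assms unfolding is_rep_def by simp
qed

lemma is_iso_sym:
  assumes "is_iso n A B" "fsubspace (sp1 A)" "fsubspace (sp2 A)"
    "\<And>i x. i < n \<Longrightarrow> x \<in> sp1 A \<Longrightarrow> arr A i x \<in> sp2 A"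
  shows "is_iso n B A"
proof -
  obtain f1 f2 where hom: "is_hom n A B f1 f2"
    and bij: "bij_betw f1 (sp1 A) (sp1 B)" "bij_betw f2 (sp2 A) (sp2 B)"
    using assms(1) unfolding is_iso_def by blast
  let ?g1 = "inv_into (sp1 A) f1" and ?g2 = "inv_into (sp2 A) f2"
  have "?g2 (arr B i y) = arr A i (?g1 y)" if "i < n" "y \<in> sp1 B" for i y
  proof -
    have g1y: "?g1 y \<in> sp1 A" "f1 (?g1 y) = y"
      using that bij(1) by (auto simp: bij_betw_def inv_into_into f_inv_into_f)
    then have "f2 (arr A i (?g1 y)) = arr B i y"
      using hom that unfolding is_hom_def by metis
    then show ?thesis using assms(4)[OF that(1) g1y(1)] bij(2) by (metis bij_betw_inv_into_left)
  qed
  moreover have "lin_on (sp1 B) (sp1 A) ?g1" "lin_on (sp2 B) (sp2 A) ?g2"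
    using lin_on_inv_into hom bij assms(2,3) unfolding is_hom_def by blast+
  ultimately have "is_hom n B A ?g1 ?g2" unfolding is_hom_def by blast
  then show ?thesis unfolding is_iso_def using bij by (blast intro: bij_betw_inv_into)
qed

lemma inj_arr_exists:
  assumes "v \<in> Gr d r"
  obtains \<alpha> where "inj_arr d r \<alpha>" "\<alpha> ` arrsp d = v"
proof -
  have v: "fsubspace v" "v \<subseteq> arrsp r" "fdim v = d" using assms unfolding Gr_def by auto
  obtain b where b: "basis_family v {..<d} b"
    using basis_family_exists[OF v(1) _ subset_trans[OF v(2) arrsp_subset_span_gam]] v(3) by blast
  have bv: "b ` {..<d} \<subseteq> v" and ind: "indep_family {..<d} b"
    using b unfolding basis_family_def by auto
  define \<alpha> where "\<alpha> c = lincomb {..<d} c b" for c :: "nat \<Rightarrow> 'a"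
  have img: "\<alpha> ` arrsp d = v"
  proof
    show "\<alpha> ` arrsp d \<subseteq> v" unfolding \<alpha>_def using lincomb_in_subspace[OF v(1) bv] by blast
  next
    show "v \<subseteq> \<alpha> ` arrsp d"
    proof
      fix x assume "x \<in> v"
      then obtain c where c: "x = lincomb {..<d} c b" using b unfolding basis_family_def by blast
      have "(\<lambda>j. if j < d then c j else 0) \<in> arrsp d" unfolding arrsp_def by simp
      moreover have "\<alpha> (\<lambda>j. if j < d then c j else 0) = x" unfolding \<alpha>_def c by (rule lincomb_cong) auto
      ultimately show "x \<in> \<alpha> ` arrsp d" by force
    qed
  qed
  have "lin_on (arrsp d) (arrsp r) \<alpha>"
    unfolding lin_on_def \<alpha>_def using img v(2)
    by (auto simp: \<alpha>_def fscale_def plus_fun_def lincomb_add lincomb_scale[unfolded fscale_def])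
  moreover have "inj_on \<alpha> (arrsp d)"
  proof (rule inj_onI, rule ext)
    fix x y j assume xy: "x \<in> arrsp d" "y \<in> arrsp d" "\<alpha> x = \<alpha> y"
    show "x j = y j"
      using xy indep_family_coeffs_eq[OF ind, of x y j] unfolding \<alpha>_def arrsp_def
      by (cases "j < d") auto
  qed
  ultimately show ?thesis using that img unfolding inj_arr_def by blast
qed

section \<open>Projective representations of \<open>K\<^sub>d\<close>\<close>

lemma psi_injective_indep_family:
  assumes N: "is_rep d N" "psi_injective d N" and m: "basis_family (sp1 N) {..<n} m"
  shows "indep_family ({..<n} \<times> {..<d}) (\<lambda>(k, i). arr N i (m k))"
  unfolding indep_family_def
proof (intro allI impI ballI)
  note N1 = is_repD[OF N(1)]
  have mV: "m k \<in> sp1 N" if "k < n" for k using m that unfolding basis_family_def by auto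
  fix c z assume c: "lincomb ({..<n} \<times> {..<d}) c (\<lambda>(k, i). arr N i (m k)) = 0"
    and z: "z \<in> {..<n} \<times> {..<d}"
  define t where "t = (\<lambda>(i, x). if i < d then lincomb {..<n} (\<lambda>k. c (k, i)) m x else 0)"
  have t: "t \<in> tensor_sp d (sp1 N)"
    unfolding mem_tensor_sp_iff t_def using mV by (auto intro: lincomb_in_subspace[OF N1(1)])
  have "psi d N t = (\<Sum>i<d. lincomb {..<n} (\<lambda>k. c (k, i)) (\<lambda>k. arr N i (m k)))"
    unfolding psi_def t_def using mV by (intro sum.cong refl) (simp add: lin_on_lincomb[OF N1(3) N1(1)] image_subset_iff)
  also have "\<dots> = lincomb ({..<n} \<times> {..<d}) c (\<lambda>(k, i). arr N i (m k))"
    unfolding lincomb_def by (subst sum.swap) (simp add: sum.cartesian_product split_beta)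
  finally have "t = 0" using c t N unfolding psi_injective_iff[OF N(1)] by simp
  obtain k i where ki: "z = (k, i)" "k < n" "i < d" using z by auto
  from \<open>t = 0\<close> have "slice t i = 0" by (simp add: fun_eq_iff)
  then have "lincomb {..<n} (\<lambda>k. c (k, i)) m = 0" using ki(3) unfolding t_def by simp
  then show "c z = 0" using m ki unfolding basis_family_def indep_family_def by auto
qed

text \<open>Such bases exhibit \<open>N\<close> as free on the generators \<open>m\<^sub>k \<in> N\<^sub>1\<close> and \<open>u\<^sub>s \<in> N\<^sub>2\<close>.\<close>

lemma psi_injective_adapted_bases:
  assumes N: "is_rep d N" "psi_injective d N"
  obtains m a u where "basis_family (sp1 N) {..<fdim (sp1 N)} m" "\<forall>s<a. u s \<in> sp2 N"
    "basis_family (sp2 N) (Inl ` {..<a} \<union> Inr ` ({..<fdim (sp1 N)} \<times> {..<d}))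
       (case_sum u (\<lambda>(k, i). arr N i (m k)))"
    "a + fdim (sp1 N) * d = fdim (sp2 N)"
proof -
  let ?n = "fdim (sp1 N)" and ?J = "{..<fdim (sp1 N)} \<times> {..<d}"
  obtain m where m: "basis_family (sp1 N) {..<?n} m"
    using N(1) fin_dim_subspace_basis unfolding is_rep_def by blast
  have "(\<lambda>(k, i). arr N i (m k)) ` ?J \<subseteq> sp2 N"
    using m unfolding basis_family_def by (auto intro!: lin_on_mem[OF is_repD(3)[OF N(1)]])
  moreover obtain B0 where "finite B0" "sp2 N \<subseteq> FS.span B0"
    using N(1) unfolding is_rep_def fin_dim_subspace_def by blast
  moreover have "finite ?J" by simp
  ultimately obtain a u where au: "\<forall>s<a. u s \<in> sp2 N"
    "basis_family (sp2 N) (Inl ` {..<a} \<union> Inr ` ?J) (case_sum u (\<lambda>(k, i). arr N i (m k)))"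
    "a + card ?J = fdim (sp2 N)"
    using basis_family_extend[OF is_repD(2)[OF N(1)]] psi_injective_indep_family[OF N m] by blast
  show ?thesis
    by (rule that[OF m au(1,2)]) (use au(3) in \<open>simp add: card_cartesian_product\<close>)
qed

lemma adapted_bases_hom_exists:
  assumes N: "is_rep d N" and X: "is_rep d X"
    and m: "basis_family (sp1 N) {..<n} m"
    and mu: "basis_family (sp2 N) (Inl ` {..<a} \<union> Inr ` ({..<n} \<times> {..<d}))
       (case_sum u (\<lambda>(k, i). arr N i (m k)))"
    and x: "\<And>k. k < n \<Longrightarrow> x k \<in> sp1 X" and y: "\<And>s. s < a \<Longrightarrow> y s \<in> sp2 X"
  obtains f1 f2 where "is_hom d N X f1 f2" "\<And>k. k < n \<Longrightarrow> f1 (m k) = x k"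
    "\<And>s. s < a \<Longrightarrow> f2 (u s) = y s"
proof -
  note N' = is_repD[OF N] and X' = is_repD[OF X]
  obtain f1 where f1: "lin_on (sp1 N) (sp1 X) f1" "\<And>k. k \<in> {..<n} \<Longrightarrow> f1 (m k) = x k"
    using basis_family_lin_on_exists[OF m N'(1) X'(1), of x] x by auto
  let ?t = "case_sum y (\<lambda>(k, i). arr X i (x k))"
  have "?t z \<in> sp2 X" if "z \<in> Inl ` {..<a} \<union> Inr ` ({..<n} \<times> {..<d})" for z
    using that y x lin_on_mem[OF X'(3)] by auto
  then obtain f2 where f2: "lin_on (sp2 N) (sp2 X) f2"
    "\<And>z. z \<in> Inl ` {..<a} \<union> Inr ` ({..<n} \<times> {..<d}) \<Longrightarrow>
       f2 (case_sum u (\<lambda>(k, i). arr N i (m k)) z) = ?t z"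
    using basis_family_lin_on_exists[OF mu N'(2) X'(2)] by blast
  have "(f2 \<circ> arr N i) z = (arr X i \<circ> f1) z" if i: "i < d" and z: "z \<in> sp1 N" for i z
  proof (rule basis_family_lin_on_eq[OF m N'(1) _ _ _ z])
    show "lin_on (sp1 N) (sp2 X) (f2 \<circ> arr N i)" using lin_on_comp N'(3)[OF i] f2(1) by blast
    show "lin_on (sp1 N) (sp2 X) (arr X i \<circ> f1)" using lin_on_comp[OF f1(1) X'(3)[OF i]] .
    show "(f2 \<circ> arr N i) (m k) = (arr X i \<circ> f1) (m k)" if "k \<in> {..<n}" for k
      using f2(2)[of "Inr (k, i)"] f1(2)[OF that] that i by simp
  qed
  then have "is_hom d N X f1 f2" unfolding is_hom_def using f1(1) f2(1) by simp
  moreover have "f2 (u s) = y s" if "s < a" for s using f2(2)[of "Inl s"] that by simp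
  ultimately show ?thesis using that f1(2) by blast
qed

lemma lift_through_surj:
  assumes "g ` A = B" "\<And>k. k < n \<Longrightarrow> b k \<in> B"
  shows "\<exists>x. \<forall>k<n. x k \<in> A \<and> g (x k) = b k"
proof -
  have "\<forall>k. \<exists>y. k < n \<longrightarrow> y \<in> A \<and> g y = b k"
  proof
    fix k show "\<exists>y. k < n \<longrightarrow> y \<in> A \<and> g y = b k"
    proof (cases "k < n")
      case True
      then have "b k \<in> g ` A" using assms by simp
      then obtain y where "y \<in> A" "g y = b k" by (metis imageE)
      then show ?thesis by (intro exI[of _ y]) simp
    qed simp
  qed
  then show ?thesis by (rule choice)
qed

lemma psi_injective_imp_projective:
  fixes N :: "('i, 'j, 'k::field) krep"
  assumes N: "is_rep d N" "psi_injective d N"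
  shows "projective_rep d N"
  unfolding projective_rep_def
proof (intro allI impI)
  fix X Y :: "(nat, nat, 'k) krep" and g1 g2 h1 h2
  assume "is_rep d X \<and> is_rep d Y \<and> is_hom d X Y g1 g2 \<and> g1 ` sp1 X = sp1 Y \<and> g2 ` sp2 X = sp2 Y
    \<and> is_hom d N Y h1 h2"
  then have X: "is_rep d X" and g: "is_hom d X Y g1 g2" and h: "is_hom d N Y h1 h2"
    and surj: "g1 ` sp1 X = sp1 Y" "g2 ` sp2 X = sp2 Y" by auto
  let ?n = "fdim (sp1 N)"
  obtain m a u where m: "basis_family (sp1 N) {..<?n} m" and u: "\<forall>s<a. u s \<in> sp2 N"
    and mu: "basis_family (sp2 N) (Inl ` {..<a} \<union> Inr ` ({..<?n} \<times> {..<d}))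
       (case_sum u (\<lambda>(k, i). arr N i (m k)))"
    and "a + ?n * d = fdim (sp2 N)"
    by (rule psi_injective_adapted_bases[OF N])
  have mN: "m k \<in> sp1 N" if "k < ?n" for k using m that unfolding basis_family_def by auto
  note N' = is_repD[OF N(1)] and g' = is_homD[OF g] and h' = is_homD[OF h]
  have "\<exists>x. \<forall>k<?n. x k \<in> sp1 X \<and> g1 (x k) = h1 (m k)"
    by (rule lift_through_surj[OF surj(1)]) (rule lin_on_mem[OF h'(1) mN])
  then obtain x where "\<forall>k<?n. x k \<in> sp1 X \<and> g1 (x k) = h1 (m k)" by blast
  then have x: "x k \<in> sp1 X" "g1 (x k) = h1 (m k)" if "k < ?n" for k using that by blast+
  have "\<exists>y. \<forall>s<a. y s \<in> sp2 X \<and> g2 (y s) = h2 (u s)"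
    by (rule lift_through_surj[OF surj(2)]) (use lin_on_mem[OF h'(2)] u in blast)
  then obtain y where "\<forall>s<a. y s \<in> sp2 X \<and> g2 (y s) = h2 (u s)" by blast
  then have y: "y s \<in> sp2 X" "g2 (y s) = h2 (u s)" if "s < a" for s using that by blast+
  obtain f1 f2 where f: "is_hom d N X f1 f2" and fm: "\<And>k. k < ?n \<Longrightarrow> f1 (m k) = x k"
    and fu: "\<And>s. s < a \<Longrightarrow> f2 (u s) = y s"
    by (rule adapted_bases_hom_exists[OF N(1) X m mu, of x y]) (use x y in auto)
  note f' = is_homD[OF f]
  have "(g1 \<circ> f1) z = h1 z" if "z \<in> sp1 N" for z
  proof (rule basis_family_lin_on_eq[OF m N'(1) lin_on_comp[OF f'(1) g'(1)] h'(1) _ that])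
    show "(g1 \<circ> f1) (m k) = h1 (m k)" if "k \<in> {..<?n}" for k using fm x that by simp
  qed
  moreover have "(g2 \<circ> f2) z = h2 z" if "z \<in> sp2 N" for z
  proof (rule basis_family_lin_on_eq[OF mu N'(2) lin_on_comp[OF f'(2) g'(2)] h'(2) _ that])
    fix w assume "w \<in> Inl ` {..<a} \<union> Inr ` ({..<?n} \<times> {..<d})"
    then consider (gen) s where "w = Inl s" "s < a" | (arr) k i where "w = Inr (k, i)" "k < ?n" "i < d"
      by auto
    then show "(g2 \<circ> f2) (case_sum u (\<lambda>(k, i). arr N i (m k)) w) = h2 (case_sum u (\<lambda>(k, i). arr N i (m k)) w)"
    proof cases
      case gen then show ?thesis using fu y by simp
    next
      case arr
      then have "g2 (f2 (arr N i (m k))) = g2 (arr X i (x k))" using f'(3) mN fm by simp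
      also have "\<dots> = arr Y i (h1 (m k))" using g'(3) x arr by simp
      also have "\<dots> = h2 (arr N i (m k))" using h'(3) mN arr by simp
      finally show ?thesis using arr by simp
    qed
  qed
  ultimately show "\<exists>f1 f2. is_hom d N X f1 f2 \<and> (\<forall>x\<in>sp1 N. g1 (f1 x) = h1 x) \<and> (\<forall>y\<in>sp2 N. g2 (f2 y) = h2 y)"
    using f by (intro exI[of _ f1] exI[of _ f2]) simp
qed

text \<open>The test objects \<open>P\<^sub>1(d)\<close> and the simple representation \<open>(k, 0)\<close>, with spaces indexed
  by \<open>nat\<close> as required by \<open>projective_rep\<close>.\<close>

definition P1_test :: "nat \<Rightarrow> (nat, nat, 'k::field) krep" where
  "P1_test d = \<lparr>sp1 = arrsp 1, sp2 = arrsp d, arr = (\<lambda>i c. fscale (c 0) (gam i))\<rparr>"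

definition simple_test :: "(nat, nat, 'k::field) krep" where
  "simple_test = \<lparr>sp1 = arrsp 1, sp2 = {0}, arr = (\<lambda>i c. 0)\<rparr>"

lemma is_rep_P1_test: "is_rep d (P1_test d :: (nat, nat, 'k::field) krep)"
proof -
  have "lin_on (arrsp 1) (arrsp d) (\<lambda>c::nat \<Rightarrow> 'k. fscale (c 0) (gam i))" if "i < d" for i
    unfolding lin_on_def using that
    by (auto simp: gam_in_arrsp FS.subspace_scale[OF subspace_arrsp] FS.scale_left_distrib)
  then show ?thesis unfolding is_rep_def P1_test_def by (simp add: fin_dim_arrsp del: One_nat_def)
qed

lemma is_rep_simple_test: "is_rep d simple_test"
  unfolding is_rep_def simple_test_def by (auto simp: fin_dim_arrsp fin_dim_subspace_zero lin_on_def)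

text \<open>Lifting the functional \<open>\<phi>\<close>, viewed as a morphism onto the simple representation, through
  \<open>P\<^sub>1(d)\<close> gives a morphism \<open>f\<close> with \<open>f\<^sub>2(N(\<gamma>\<^sub>i) x) = \<phi>(x) \<gamma>\<^sub>i\<close>; applied to \<open>\<psi>\<^sub>N(t) = 0\<close>
  this gives \<open>\<Sum>\<^sub>l \<phi>(t\<^sub>l) \<gamma>\<^sub>l = 0\<close>.\<close>

lemma projective_functional_psi_kernel:
  assumes N: "is_rep d N" "projective_rep d N"
    and \<phi>: "lin_on (sp1 N) (UNIV :: (unit \<Rightarrow> 'k::field) set) \<phi>"
    and t: "t \<in> tensor_sp d (sp1 N)" "psi d N t = 0" and j: "j < d"
  shows "\<phi> (slice t j) () = 0"
proof -
  note N' = is_repD[OF N(1)]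
  define h1 where "h1 x = fscale (\<phi> x ()) (gam 0 :: nat \<Rightarrow> 'k)" for x
  have h: "is_hom d N simple_test h1 (\<lambda>_. 0)"
    using \<phi> unfolding is_hom_def simple_test_def lin_on_def h1_def
    by (auto simp: FS.scale_left_distrib FS.subspace_scale[OF subspace_arrsp] gam_in_arrsp)
  have g: "is_hom d (P1_test d) simple_test id (\<lambda>_. 0)"
    unfolding is_hom_def simple_test_def P1_test_def lin_on_def by auto
  have surj: "id ` sp1 (P1_test d) = sp1 (simple_test :: (nat, nat, 'k) krep)"
    "(\<lambda>_. 0) ` sp2 (P1_test d :: (nat, nat, 'k) krep) = sp2 (simple_test :: (nat, nat, 'k) krep)"
    using FS.subspace_0[OF subspace_arrsp] by (auto simp: P1_test_def simple_test_def)
  have "\<exists>f1 f2. is_hom d N (P1_test d) f1 f2 \<and> (\<forall>x\<in>sp1 N. id (f1 x) = h1 x) \<and>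
      (\<forall>y\<in>sp2 N. (\<lambda>_. 0) (f2 y) = (\<lambda>_. 0 :: nat \<Rightarrow> 'k) y)"
    using N(2)[unfolded projective_rep_def, rule_format, of "P1_test d" simple_test id "\<lambda>_. 0" h1 "\<lambda>_. 0"]
      is_rep_P1_test is_rep_simple_test g h surj by blast
  then obtain f1 f2 where f: "is_hom d N (P1_test d) f1 f2" "\<forall>x\<in>sp1 N. id (f1 x) = h1 x"
    by blast
  have f2: "lin_on (sp2 N) (arrsp d) f2" using f(1) unfolding is_hom_def P1_test_def by simp
  have "f2 (arr N i x) = fscale (\<phi> x ()) (gam i)" if "i < d" "x \<in> sp1 N" for i x
    using f that unfolding is_hom_def P1_test_def h1_def by (simp add: gam_def)
  moreover have tl: "slice t l \<in> sp1 N" if "l < d" for l using t(1) that unfolding mem_tensor_sp_iff by blast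
  moreover have "f2 (psi d N t) = (\<Sum>l<d. f2 (arr N l (slice t l)))"
    unfolding psi_def using tl by (intro lin_on_sum[OF f2 N'(2)]) (auto intro: lin_on_mem[OF N'(3)])
  ultimately have "(\<Sum>l<d. fscale (\<phi> (slice t l) ()) (gam l)) = 0"
    using t(2) lin_on_zero[OF f2 N'(2)] by simp
  then have "(\<Sum>l<d. fscale (\<phi> (slice t l) ()) (gam l)) j = 0" by simp
  then have "(\<Sum>l<d. \<phi> (slice t l) () * gam l j) = 0" by (simp add: sum_fun_apply)
  then show ?thesis using j by (simp add: sum_mult_gam)
qed

lemma projective_imp_psi_injective:
  fixes N :: "('i, 'j, 'k::field) krep"
  assumes N: "is_rep d N" "projective_rep d N"
  shows "psi_injective d N"
  unfolding psi_injective_iff[OF N(1)]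
proof (intro ballI impI)
  fix t assume t: "t \<in> tensor_sp d (sp1 N)" "psi d N t = 0"
  obtain m where m: "basis_family (sp1 N) {..<fdim (sp1 N)} m"
    using N(1) fin_dim_subspace_basis unfolding is_rep_def by blast
  have "slice t j = 0" if j: "j < d" for j
  proof (rule ccontr)
    assume "slice t j \<noteq> 0"
    moreover have "slice t j \<in> sp1 N" using t(1) j unfolding mem_tensor_sp_iff by blast
    ultimately obtain \<phi> where "lin_on (sp1 N) (UNIV :: (unit \<Rightarrow> 'k) set) \<phi>" "\<phi> (slice t j) () \<noteq> 0"
      using basis_family_nonzero_functional[OF m is_repD(1)[OF N(1)]] by blast
    then show False using projective_functional_psi_kernel[OF N _ t j] by blast
  qed
  then show "t = 0" by (rule tensor_sp_eq_zeroI[OF t(1)])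
qed

lemma projective_rep_iff_psi_injective:
  "is_rep d N \<Longrightarrow> projective_rep d N \<longleftrightarrow> psi_injective d N"
  using projective_imp_psi_injective psi_injective_imp_projective by blast

section \<open>The representations \<open>a P\<^sub>0(d) \<oplus> n P\<^sub>1(d)\<close>\<close>

abbreviation std_proj :: "nat \<Rightarrow> nat \<Rightarrow> nat \<Rightarrow>
    (nat \<times> unit + nat \<times> unit, nat \<times> unit + nat \<times> nat, 'k::field) krep" where
  "std_proj a n d \<equiv> dsum (mult_rep a P0) (mult_rep n (P1 d))"

lemma mem_sp1_std_proj:
  "x \<in> sp1 (std_proj a n d) \<longleftrightarrow> (\<forall>p. x (Inl p) = 0) \<and> (\<forall>k u. n \<le> k \<longrightarrow> x (Inr (k, u)) = 0)"
  by (auto simp: dsum_def mult_rep_def P0_def P1_def comp_def fun_eq_iff split: if_splits)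

lemma mem_sp2_std_proj:
  "y \<in> sp2 (std_proj a n d) \<longleftrightarrow>
    (\<forall>s u. a \<le> s \<longrightarrow> y (Inl (s, u)) = 0) \<and> (\<forall>k j. n \<le> k \<or> d \<le> j \<longrightarrow> y (Inr (k, j)) = 0)"
  by (auto simp: dsum_def mult_rep_def P0_def P1_def comp_def fun_eq_iff arrsp_def split: if_splits)

lemma arr_std_proj:
  "arr (std_proj a n d) i x = (\<lambda>z. case z of Inl _ \<Rightarrow> 0
     | Inr (k, j) \<Rightarrow> if k < n then x (Inr (k, ())) * gam i j else 0)"
  by (auto simp: fun_eq_iff dsum_def mult_rep_def P0_def P1_def split: sum.splits)

lemma subspace_sp1_std_proj: "fsubspace (sp1 (std_proj a n d))"
  and subspace_sp2_std_proj: "fsubspace (sp2 (std_proj a n d))"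
  by (rule FS.subspaceI; simp add: mem_sp1_std_proj mem_sp2_std_proj)+

lemma lin_on_arr_std_proj:
  "i < d \<Longrightarrow> lin_on (sp1 (std_proj a n d)) (sp2 (std_proj a n d)) (arr (std_proj a n d) i)"
  unfolding lin_on_def mem_sp2_std_proj arr_std_proj
  by (auto simp: gam_def fun_eq_iff algebra_simps split: sum.splits)

lemma psi_injective_std_proj: "psi_injective d (std_proj a n d)"
proof -
  let ?F = "std_proj a n d :: (_, _, 'k::field) krep"
  have "t = 0" if t: "t \<in> tensor_sp d (sp1 ?F)" "psi d ?F t = 0" for t
  proof (rule tensor_sp_eq_zeroI[OF t(1)], rule ext)
    fix l z assume l: "l < d"
    have tl: "slice t l \<in> sp1 ?F" using t(1) l unfolding mem_tensor_sp_iff by blast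
    show "slice t l z = 0 z"
    proof (cases z)
      case (Inl p) then show ?thesis using tl unfolding mem_sp1_std_proj by (cases p) simp
    next
      case (Inr q)
      obtain k u where q: "q = (k, u)" by (cases q)
      show ?thesis
      proof (cases "k < n")
        case False then show ?thesis using tl Inr q unfolding mem_sp1_std_proj by simp
      next
        case True
        have "0 = psi d ?F t (Inr (k, l))" using t(2) by simp
        also have "\<dots> = (\<Sum>l'<d. t (l', Inr (k, ())) * gam l' l)"
          using True unfolding psi_def by (simp add: sum_fun_apply arr_std_proj)
        also have "\<dots> = t (l, Inr (k, ()))" using l by (simp add: sum_mult_gam)
        finally show ?thesis using Inr q by simp
      qed
    qed
  qed
  moreover note lin_on_psi[OF subspace_sp1_std_proj subspace_sp2_std_proj lin_on_arr_std_proj]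
  ultimately show ?thesis
    unfolding psi_injective_def using lin_on_inj_on_iff subspace_tensor_sp subspace_sp1_std_proj by blast
qed

definition tensor_map :: "nat \<Rightarrow> (('i \<Rightarrow> 'k) \<Rightarrow> 'i2 \<Rightarrow> 'k) \<Rightarrow> (nat \<times> 'i \<Rightarrow> 'k) \<Rightarrow> nat \<times> 'i2 \<Rightarrow> 'k::zero" where
  "tensor_map n f t = (\<lambda>(l, y). if l < n then f (slice t l) y else 0)"

lemma slice_tensor_map: "l < n \<Longrightarrow> slice (tensor_map n f t) l = f (slice t l)"
  by (simp add: tensor_map_def)

lemma tensor_map_mem:
  assumes "lin_on V W f" "t \<in> tensor_sp n V"
  shows "tensor_map n f t \<in> tensor_sp n W"
  using assms unfolding mem_tensor_sp_iff by (auto simp: tensor_map_def lin_on_mem)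

lemma psi_tensor_map:
  assumes f: "is_hom d N F f1 f2" and N: "is_rep d N" and t: "t \<in> tensor_sp d (sp1 N)"
  shows "psi d F (tensor_map d f1 t) = f2 (psi d N t)"
proof -
  note N' = is_repD[OF N] and f' = is_homD[OF f]
  have tl: "slice t l \<in> sp1 N" if "l < d" for l using t that unfolding mem_tensor_sp_iff by blast
  have "f2 (psi d N t) = (\<Sum>l<d. f2 (arr N l (slice t l)))"
    unfolding psi_def by (rule lin_on_sum[OF f'(2) N'(2)]) (simp add: lin_on_mem[OF N'(3)] tl)
  also have "\<dots> = psi d F (tensor_map d f1 t)"
    unfolding psi_def using f'(3) tl by (simp add: slice_tensor_map)
  finally show ?thesis by simp
qed

lemma psi_injective_transfer:
  assumes N: "is_rep d N" and f: "is_hom d N F f1 f2" "inj_on f1 (sp1 N)"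
    and F: "psi_injective d F"
  shows "psi_injective d N"
  unfolding psi_injective_iff[OF N]
proof (intro ballI impI)
  note N' = is_repD[OF N] and f' = is_homD[OF f(1)]
  fix t assume t: "t \<in> tensor_sp d (sp1 N)" "psi d N t = 0"
  have 0: "0 \<in> tensor_sp d (sp1 N)" by (rule FS.subspace_0[OF subspace_tensor_sp[OF N'(1)]])
  have "psi d N 0 = 0" by (rule lin_on_zero[OF lin_on_psi[OF N'] subspace_tensor_sp[OF N'(1)]])
  then have "psi d F (tensor_map d f1 t) = psi d F (tensor_map d f1 0)"
    unfolding psi_tensor_map[OF f(1) N t(1)] psi_tensor_map[OF f(1) N 0] t(2) by simp
  moreover have "tensor_map d f1 t \<in> tensor_sp d (sp1 F)" "tensor_map d f1 0 \<in> tensor_sp d (sp1 F)"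
    using tensor_map_mem[OF f'(1)] t(1) 0 by blast+
  ultimately have "tensor_map d f1 t = tensor_map d f1 0"
    by (rule inj_onD[OF F[unfolded psi_injective_def]])
  show "t = 0"
  proof (rule tensor_sp_eq_zeroI[OF t(1)])
    fix l assume l: "l < d"
    have "f1 (slice t l) = f1 (slice 0 l)"
      using slice_tensor_map[OF l, of f1 t] slice_tensor_map[OF l, of f1 0] \<open>tensor_map d f1 t = tensor_map d f1 0\<close>
      by simp
    moreover have "slice t l \<in> sp1 N" "slice 0 l \<in> sp1 N"
      using t(1) 0 l unfolding mem_tensor_sp_iff by blast+
    ultimately have "slice t l = slice 0 l" by (rule inj_onD[OF f(2)])
    then show "slice t l = 0" by (simp add: zero_fun_def)
  qed
qed

lemma iso_std_proj_imp_psi_injective: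
  "is_rep d N \<Longrightarrow> is_iso d N (std_proj a n d) \<Longrightarrow> psi_injective d N"
  unfolding is_iso_def using psi_injective_transfer psi_injective_std_proj bij_betw_imp_inj_on by metis

lemma bij_betw_std_proj_coords1:
  "bij_betw (\<lambda>x k. x (Inr (k, ()))) (sp1 (std_proj a n d)) {c. \<forall>k. k \<notin> {..<n} \<longrightarrow> c k = 0}"
  by (rule bij_betw_byWitness[where f' = "\<lambda>c z. case z of Inl _ \<Rightarrow> 0 | Inr (k, _) \<Rightarrow> c k"])
    (auto simp: fun_eq_iff mem_sp1_std_proj split: sum.splits)

lemma bij_betw_std_proj_coords2:
  "bij_betw (\<lambda>y z. y (case_sum (\<lambda>s. Inl (s, ())) Inr z)) (sp2 (std_proj a n d))
     {c. \<forall>z. z \<notin> Inl ` {..<a} \<union> Inr ` ({..<n} \<times> {..<d}) \<longrightarrow> c z = 0}"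
proof (rule bij_betw_byWitness[where f' = "\<lambda>c w. case w of Inl (s, _) \<Rightarrow> c (Inl s) | Inr p \<Rightarrow> c (Inr p)"])
  show "(\<lambda>y z. y (case_sum (\<lambda>s. Inl (s, ())) Inr z)) ` sp2 (std_proj a n d)
      \<subseteq> {c. \<forall>z. z \<notin> Inl ` {..<a} \<union> Inr ` ({..<n} \<times> {..<d}) \<longrightarrow> c z = 0}"
  proof (intro subsetI CollectI allI impI)
    fix c z assume "c \<in> (\<lambda>y z. y (case_sum (\<lambda>s. Inl (s, ())) Inr z)) ` sp2 (std_proj a n d)"
      and z: "z \<notin> Inl ` {..<a} \<union> Inr ` ({..<n} \<times> {..<d})"
    then obtain y where y: "y \<in> sp2 (std_proj a n d)" "c = (\<lambda>z. y (case_sum (\<lambda>s. Inl (s, ())) Inr z))"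
      by blast
    show "c z = 0"
    proof (cases z)
      case (Inl s) then show ?thesis using y z unfolding mem_sp2_std_proj by (auto simp: image_iff)
    next
      case (Inr p) then show ?thesis using y z unfolding mem_sp2_std_proj by (cases p) (auto simp: image_iff)
    qed
  qed
qed (auto simp: fun_eq_iff mem_sp2_std_proj image_iff split: sum.splits)

lemma psi_injective_imp_iso_std_proj:
  fixes N :: "('i, 'j, 'k::field) krep"
  assumes N: "is_rep d N" "psi_injective d N"
  shows "\<exists>a. int a = Delta N d \<and> is_iso d N (std_proj a (fdim (sp1 N)) d)"
proof -
  let ?n = "fdim (sp1 N)"
  obtain m a u where m: "basis_family (sp1 N) {..<?n} m" and u: "\<forall>s<a. u s \<in> sp2 N"
    and mu: "basis_family (sp2 N) (Inl ` {..<a} \<union> Inr ` ({..<?n} \<times> {..<d}))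
       (case_sum u (\<lambda>(k, i). arr N i (m k)))"
    and dim: "a + ?n * d = fdim (sp2 N)"
    by (rule psi_injective_adapted_bases[OF N])
  note N' = is_repD[OF N(1)]
  let ?F = "std_proj a ?n d :: (_, _, 'k) krep"
  let ?I = "Inl ` {..<a} \<union> Inr ` ({..<?n} \<times> {..<d})" and ?e = "case_sum u (\<lambda>(k, i). arr N i (m k))"
  define G1 where "G1 x = lincomb {..<?n} (\<lambda>k. x (Inr (k, ()))) m" for x :: "nat \<times> unit + nat \<times> unit \<Rightarrow> 'k"
  define G2 where "G2 y = lincomb ?I (\<lambda>z. y (case_sum (\<lambda>s. Inl (s, ())) Inr z)) ?e"
    for y :: "nat \<times> unit + nat \<times> nat \<Rightarrow> 'k"
  have mN: "m ` {..<?n} \<subseteq> sp1 N" and eN: "?e ` ?I \<subseteq> sp2 N"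
    using m mu unfolding basis_family_def by auto
  have bij1: "bij_betw G1 (sp1 ?F) (sp1 N)"
    using bij_betw_trans[OF bij_betw_std_proj_coords1 basis_family_bij_coeffs[OF m N'(1)]]
    unfolding G1_def comp_def .
  have bij2: "bij_betw G2 (sp2 ?F) (sp2 N)"
    using bij_betw_trans[OF bij_betw_std_proj_coords2 basis_family_bij_coeffs[OF mu N'(2)]]
    unfolding G2_def comp_def .
  have lin1: "lin_on (sp1 ?F) (sp1 N) G1"
    unfolding lin_on_def G1_def
    by (auto simp: lincomb_in_subspace[OF N'(1) mN] lincomb_add[symmetric] lincomb_scale[symmetric])
  have lin2: "lin_on (sp2 ?F) (sp2 N) G2"
    unfolding lin_on_def G2_def
    by (auto simp: lincomb_in_subspace[OF N'(2) eN] lincomb_add[symmetric] lincomb_scale[symmetric])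
  have "G2 (arr ?F i x) = arr N i (G1 x)" if i: "i < d" for i x
  proof -
    have "G2 (arr ?F i x) = (\<Sum>(k, j)\<in>{..<?n} \<times> {..<d}. fscale (x (Inr (k, ())) * gam i j) (arr N j (m k)))"
      unfolding G2_def by (subst lincomb_Inl_Inr) (auto simp: arr_std_proj intro!: sum.cong)
    also have "\<dots> = (\<Sum>k<?n. fscale (x (Inr (k, ()))) (arr N i (m k)))"
      unfolding sum.cartesian_product[symmetric]
      by (intro sum.cong refl) (simp add: sum_fscale_gam i)
    also have "\<dots> = lincomb {..<?n} (\<lambda>k. x (Inr (k, ()))) (\<lambda>k. arr N i (m k))"
      by (simp add: lincomb_def)
    also have "\<dots> = arr N i (G1 x)"
      unfolding G1_def by (rule lin_on_lincomb[OF N'(3)[OF i] N'(1) mN, symmetric])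
    finally show ?thesis .
  qed
  then have "is_hom d ?F N G1 G2" unfolding is_hom_def using lin1 lin2 by blast
  then have "is_iso d ?F N" unfolding is_iso_def using bij1 bij2 by blast
  then have "is_iso d N ?F"
    by (rule is_iso_sym[OF _ subspace_sp1_std_proj subspace_sp2_std_proj lin_on_mem[OF lin_on_arr_std_proj]])
  moreover have "int a = Delta N d"
    using dim unfolding Delta_def by (simp add: algebra_simps flip: of_nat_mult of_nat_add)
  ultimately show ?thesis by blast
qed

lemma psi_injective_iff_iso_std_proj:
  "is_rep d N \<Longrightarrow>
    psi_injective d N \<longleftrightarrow> (\<exists>a. int a = Delta N d \<and> is_iso d N (std_proj a (fdim (sp1 N)) d))"
  using psi_injective_imp_iso_std_proj iso_std_proj_imp_psi_injective by metis

section \<open>The representation \<open>E(v)\<close>\<close>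

lemma dual_sp_add: "\<phi> \<in> dual_sp V \<Longrightarrow> x \<in> V \<Longrightarrow> y \<in> V \<Longrightarrow> \<phi> (x + y) = \<phi> x + \<phi> y"
  and dual_sp_scale: "\<phi> \<in> dual_sp V \<Longrightarrow> x \<in> V \<Longrightarrow> \<phi> (fscale c x) = c * \<phi> x"
  and dual_sp_outside: "\<phi> \<in> dual_sp V \<Longrightarrow> x \<notin> V \<Longrightarrow> \<phi> x = 0"
  unfolding dual_sp_def lin_on_def by (auto simp: fun_eq_iff)

lemma dual_sp_lin_on: "\<phi> \<in> dual_sp V \<Longrightarrow> lin_on V (UNIV :: (unit \<Rightarrow> 'k) set) (\<lambda>x u. \<phi> x :: 'k::field)"
  unfolding dual_sp_def by auto

lemma dual_spI:
  assumes "\<And>x y. x \<in> V \<Longrightarrow> y \<in> V \<Longrightarrow> \<phi> (x + y) = \<phi> x + \<phi> y"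
    "\<And>c x. x \<in> V \<Longrightarrow> \<phi> (fscale c x) = c * \<phi> x" "\<And>x. x \<notin> V \<Longrightarrow> \<phi> x = 0"
  shows "\<phi> \<in> dual_sp V"
  unfolding dual_sp_def lin_on_def using assms by (auto simp: fun_eq_iff)

lemma dual_sp_zero: "\<phi> \<in> dual_sp V \<Longrightarrow> fsubspace V \<Longrightarrow> \<phi> 0 = 0"
  using lin_on_zero[OF dual_sp_lin_on] by (metis zero_fun_apply)

lemma dual_sp_sum:
  assumes "\<phi> \<in> dual_sp V" "fsubspace V" "\<And>z. z \<in> I \<Longrightarrow> x z \<in> V"
  shows "\<phi> (\<Sum>z\<in>I. x z) = (\<Sum>z\<in>I. \<phi> (x z))"
  using fun_cong[OF lin_on_sum[OF dual_sp_lin_on[OF assms(1)] assms(2,3)], where x="()"]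
  by (simp add: sum_fun_apply)

lemma dual_sp_diff:
  assumes "\<phi> \<in> dual_sp V" "fsubspace V" "x \<in> V" "y \<in> V"
  shows "\<phi> (x - y) = \<phi> x - \<phi> y"
  using fun_cong[OF lin_on_diff[OF dual_sp_lin_on[OF assms(1)] assms(2-4)], where x="()"] by simp

lemma lin_on_dual_spI:
  assumes "lin_on V (UNIV :: (unit \<Rightarrow> 'k::field) set) \<phi>" "fsubspace V"
  shows "(\<lambda>x. if x \<in> V then \<phi> x () else 0) \<in> dual_sp V"
proof (rule dual_spI)
  fix x y assume "x \<in> V" "y \<in> V"
  then show "(if x + y \<in> V then \<phi> (x + y) () else 0) = (if x \<in> V then \<phi> x () else 0) + (if y \<in> V then \<phi> y () else 0)"
    using lin_on_add[OF assms(1)] FS.subspace_add[OF assms(2)] by simp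
next
  fix c x assume "x \<in> V"
  then show "(if fscale c x \<in> V then \<phi> (fscale c x) () else 0) = c * (if x \<in> V then \<phi> x () else 0)"
    using lin_on_scale[OF assms(1)] FS.subspace_scale[OF assms(2)] by simp
qed simp

lemma subspace_dual_sp: "fsubspace (dual_sp V)"
  by (rule FS.subspaceI) (auto intro!: dual_spI simp: dual_sp_add dual_sp_scale dual_sp_outside algebra_simps)

lemma lin_on_eval_sum:
  assumes "finite P" "fsubspace W" "\<And>p. p \<in> P \<Longrightarrow> y p \<in> W"
  shows "lin_on V W (\<lambda>\<phi>. \<Sum>p\<in>P. fscale (\<phi> (x p)) (y p))"
  unfolding lin_on_def using assms
  by (auto intro!: FS.subspace_sum FS.subspace_scale
      simp: FS.scale_left_distrib sum.distrib FS.scale_sum_right)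

lemma annih_separates:
  fixes v :: "(nat \<Rightarrow> 'k::field) set"
  assumes v: "fsubspace v" "v \<subseteq> arrsp r" and a: "a \<in> arrsp r" "a \<notin> v"
  obtains \<phi> where "\<phi> \<in> annih r v" "\<phi> a \<noteq> 0"
proof -
  have span: "finite (gam ` {..<r})" "v \<subseteq> FS.span (gam ` {..<r})"
    using v(2) arrsp_subset_span_gam by auto
  obtain b where b: "basis_family v {..<fdim v} b" using basis_family_exists[OF v(1) span] .
  have bv: "b ` {..<fdim v} \<subseteq> v" and indb: "indep_family {..<fdim v} b"
    using b unfolding basis_family_def by auto
  have "b ` {..<fdim v} \<subseteq> arrsp r" using bv v(2) by blast
  then obtain q w where "\<forall>s<q. w s \<in> arrsp r"
    and qw: "basis_family (arrsp r) (Inl ` {..<q} \<union> Inr ` {..<fdim v}) (case_sum w b)"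
    and "q + card {..<fdim v} = fdim (arrsp r :: (nat \<Rightarrow> 'k) set)"
    by (rule basis_family_extend[OF subspace_arrsp finite_imageI[OF finite_lessThan]
      arrsp_subset_span_gam finite_lessThan _ indb])
  let ?I = "Inl ` {..<q} \<union> Inr ` {..<fdim v}" and ?h = "case_sum w b"
  obtain c where c: "a = lincomb ?I c ?h" using qw a(1) unfolding basis_family_def by blast
  have "\<exists>s<q. c (Inl s) \<noteq> 0"
  proof (rule ccontr)
    assume "\<not> (\<exists>s<q. c (Inl s) \<noteq> 0)"
    then have "(\<Sum>s<q. fscale (c (Inl s)) (w s)) = 0" by simp
    then have "a = lincomb {..<fdim v} (\<lambda>j. c (Inr j)) b"
      using c by (simp add: lincomb_Inl_Inr) (simp add: lincomb_def)
    then show False using a(2) lincomb_in_subspace[OF v(1) bv] by simp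
  qed
  then obtain s0 where s0: "s0 < q" "c (Inl s0) \<noteq> 0" by blast
  obtain \<phi>0 where \<phi>0: "lin_on (arrsp r) (UNIV :: (unit \<Rightarrow> 'k) set) \<phi>0"
    "\<And>c. \<phi>0 (lincomb ?I c ?h) () = c (Inl s0)"
    using basis_family_coord_functional[OF qw subspace_arrsp, of "Inl s0"] s0(1) by blast
  define \<phi> where "\<phi> x = (if x \<in> arrsp r then \<phi>0 x () else 0)" for x
  have "\<phi> \<in> dual_sp (arrsp r)" unfolding \<phi>_def by (rule lin_on_dual_spI[OF \<phi>0(1) subspace_arrsp])
  moreover have "\<phi> y = 0" if y: "y \<in> v" for y
  proof -
    obtain e where e: "y = lincomb {..<fdim v} e b" using b y unfolding basis_family_def by blast
    then have "y = lincomb ?I (case_sum (\<lambda>_. 0) e) ?h" by (simp add: lincomb_Inl_Inr) (simp add: lincomb_def)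
    then show ?thesis unfolding \<phi>_def using \<phi>0(2) by simp
  qed
  ultimately have "\<phi> \<in> annih r v" unfolding annih_def by blast
  moreover have "\<phi> a \<noteq> 0" unfolding \<phi>_def using a(1) c \<phi>0(2) s0(2) by simp
  ultimately show ?thesis using that by blast
qed

lemma quot_proj_eq_zero_iff:
  assumes "fsubspace v" "v \<subseteq> arrsp r" "a \<in> arrsp r"
  shows "quot_proj r v a = 0 \<longleftrightarrow> a \<in> v"
proof
  assume "quot_proj r v a = 0"
  then have "\<phi> a = 0" if "\<phi> \<in> annih r v" for \<phi>
    using that fun_cong[of "quot_proj r v a" 0 \<phi>] unfolding quot_proj_def by simp
  then show "a \<in> v" using annih_separates[OF assms] by blast
qed (auto simp: quot_proj_def annih_def fun_eq_iff)

text \<open>\<open>\<tau>C(v) = (tauC1 r v, tauC2 r v)\<close>, so that \<open>E(v) = (tauC2 r v\<^sup>*, tauC1 r v\<^sup>*)\<close>. Here \<open>tauC2 r v\<close>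
  is the kernel of \<open>\<psi>\<^bsub>C(v)\<^esub>\<close>, a copy of \<open>v\<close> inside \<open>k\<^sup>r\<close>, and \<open>tauC1 r v\<close> is the kernel of
  \<open>diag_sum\<close> on \<open>(tauC2 r v)\<^sup>r\<close>.\<close>

definition tauC1 :: "nat \<Rightarrow> (nat \<Rightarrow> 'k::field) set \<Rightarrow> (nat \<times> (nat \<times> unit) \<Rightarrow> 'k) set" where
  "tauC1 r v = sp1 (tau r (Crep r v))"

definition tauC2 :: "nat \<Rightarrow> (nat \<Rightarrow> 'k::field) set \<Rightarrow> (nat \<times> unit \<Rightarrow> 'k) set" where
  "tauC2 r v = sp1 (shift r (Crep r v))"

definition diag_sum :: "nat \<Rightarrow> (nat \<times> (nat \<times> unit) \<Rightarrow> 'k::field) \<Rightarrow> 'k" where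
  "diag_sum r G = (\<Sum>l<r. G (l, (l, ())))"

definition coeffs_to_arr :: "nat \<Rightarrow> (nat \<times> unit \<Rightarrow> 'k::field) \<Rightarrow> nat \<Rightarrow> 'k" where
  "coeffs_to_arr r c = (\<lambda>j. if j < r then c (j, ()) else 0)"

definition arr_to_coeffs :: "(nat \<Rightarrow> 'k::field) \<Rightarrow> nat \<times> unit \<Rightarrow> 'k" where
  "arr_to_coeffs a = (\<lambda>p. a (fst p))"

lemma shift_simps [simp]:
  "sp1 (shift r M) = {f \<in> tensor_sp r (sp1 M). psi r M f = 0}" "sp2 (shift r M) = sp1 M"
  "arr (shift r M) i f = slice f i"
  by (simp_all add: shift_def)

lemma Erep_simps:
  "sp1 (Erep r v) = dual_sp (tauC2 r v)" "sp2 (Erep r v) = dual_sp (tauC1 r v)"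
  "arr (Erep r v) i \<phi> = (\<lambda>F. if F \<in> tauC1 r v then \<phi> (slice F i) else 0)"
proof -
  show "sp1 (Erep r v) = dual_sp (tauC2 r v)" "sp2 (Erep r v) = dual_sp (tauC1 r v)"
    by (simp_all add: Erep_def Dual_def tau_def tauC1_def tauC2_def)
  have "arr (Erep r v) i \<phi> =
      (\<lambda>F. if F \<in> sp1 (tau r (Crep r v)) then \<phi> (arr (tau r (Crep r v)) i F) else 0)"
    by (simp add: Erep_def Dual_def del: shift_simps)
  then show "arr (Erep r v) i \<phi> = (\<lambda>F. if F \<in> tauC1 r v then \<phi> (slice F i) else 0)"
    unfolding tauC1_def tau_def by (simp only: shift_simps(3))
qed

lemma tauC1_eq: "tauC1 r v = {F \<in> tensor_sp r (tauC2 r v). diag_sum r F = 0}"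
proof -
  have "psi r (shift r (Crep r v)) F = (\<lambda>u. \<Sum>l<r. F (l, (l, u)))" for F
    unfolding psi_def by (simp add: sum_fun_apply fun_eq_iff)
  moreover have "(\<lambda>u::unit. \<Sum>l<r. F (l, (l, u))) = 0 \<longleftrightarrow> diag_sum r F = 0" for F :: "_ \<Rightarrow> 'a"
    unfolding diag_sum_def by (auto simp: fun_eq_iff)
  ultimately show ?thesis unfolding tauC1_def tauC2_def tau_def by auto
qed

lemma coeffs_to_arr_mem: "coeffs_to_arr r c \<in> arrsp r"
  by (simp add: coeffs_to_arr_def arrsp_def)

lemma coeffs_to_arr_eq_sum: "coeffs_to_arr r c = (\<Sum>l<r. fscale (c (l, ())) (gam l))"
  by (rule ext) (simp add: sum_fun_apply coeffs_to_arr_def sum_mult_gam)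

lemma coeffs_to_arr_to_coeffs: "a \<in> arrsp r \<Longrightarrow> coeffs_to_arr r (arr_to_coeffs a) = a"
  by (auto simp: arr_to_coeffs_def coeffs_to_arr_def fun_eq_iff arrsp_def)

lemma arr_to_coeffs_to_arr:
  "(\<forall>l u. r \<le> l \<longrightarrow> c (l, u) = 0) \<Longrightarrow> arr_to_coeffs (coeffs_to_arr r c) = c"
  by (auto simp: arr_to_coeffs_def coeffs_to_arr_def fun_eq_iff)

lemma arr_to_coeffs_lincomb: "arr_to_coeffs (lincomb I c e) = lincomb I c (\<lambda>j. arr_to_coeffs (e j))"
  unfolding arr_to_coeffs_def lincomb_def by (simp add: fun_eq_iff sum_fun_apply)

lemma psi_Crep: "psi r (Crep r v) c = quot_proj r v (coeffs_to_arr r c)"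
proof
  fix \<phi>
  have "psi r (Crep r v) c \<phi> = (if \<phi> \<in> annih r v then (\<Sum>l<r. \<phi> (fscale (c (l, ())) (gam l))) else 0)"
    unfolding psi_def Crep_def quot_proj_def by (simp add: sum_fun_apply)
  also have "\<dots> = quot_proj r v (coeffs_to_arr r c) \<phi>"
    unfolding quot_proj_def coeffs_to_arr_eq_sum annih_def
    by (auto intro!: dual_sp_sum[symmetric] FS.subspace_scale simp: subspace_arrsp gam_in_arrsp)
  finally show "psi r (Crep r v) c \<phi> = quot_proj r v (coeffs_to_arr r c) \<phi>" .
qed

lemma mem_tauC2_iff:
  assumes "fsubspace v" "v \<subseteq> arrsp r"
  shows "c \<in> tauC2 r v \<longleftrightarrow> (\<forall>l u. r \<le> l \<longrightarrow> c (l, u) = 0) \<and> coeffs_to_arr r c \<in> v"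
proof -
  have "sp1 (Crep r v) = UNIV" by (simp add: Crep_def)
  then show ?thesis
    unfolding tauC2_def shift_simps psi_Crep mem_tensor_sp_iff
    using quot_proj_eq_zero_iff[OF assms coeffs_to_arr_mem] by simp
qed

lemma subspace_tauC2:
  assumes "fsubspace v" "v \<subseteq> arrsp r"
  shows "fsubspace (tauC2 r v)"
proof -
  have lin: "coeffs_to_arr r (x + y) = coeffs_to_arr r x + coeffs_to_arr r y"
    "coeffs_to_arr r (fscale c x) = fscale c (coeffs_to_arr r x)"
    "coeffs_to_arr r 0 = 0" for x y c
    by (simp_all add: coeffs_to_arr_def fun_eq_iff)
  show ?thesis
    by (intro FS.subspaceI)
      (simp_all add: mem_tauC2_iff[OF assms] lin FS.subspace_0[OF assms(1)]
        FS.subspace_add[OF assms(1)] FS.subspace_scale[OF assms(1)])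
qed

lemma subspace_tauC1:
  assumes "fsubspace v" "v \<subseteq> arrsp r"
  shows "fsubspace (tauC1 r v)"
proof -
  have T: "fsubspace (tensor_sp r (tauC2 r v))" by (rule subspace_tensor_sp[OF subspace_tauC2[OF assms]])
  show ?thesis
    unfolding tauC1_eq diag_sum_def
    using FS.subspace_0[OF T] FS.subspace_add[OF T] FS.subspace_scale[OF T]
    by (intro FS.subspaceI) (simp_all add: sum.distrib sum_distrib_left[symmetric])
qed

definition single_slice :: "nat \<Rightarrow> ('a \<Rightarrow> 'k::zero) \<Rightarrow> nat \<times> 'a \<Rightarrow> 'k" where
  "single_slice l x = (\<lambda>(l', y). if l' = l then x y else 0)"

lemma slice_single_slice: "slice (single_slice l x) i = (if i = l then x else 0)"
  by (auto simp: single_slice_def fun_eq_iff)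

lemma single_slice_add: "single_slice l (x + y) = single_slice l x + single_slice l y"
  and single_slice_scale: "single_slice l (fscale c x) = fscale c (single_slice l x)"
  by (auto simp: single_slice_def fun_eq_iff)

lemma single_slice_mem:
  assumes "fsubspace V" "l < r" "x \<in> V"
  shows "single_slice l x \<in> tensor_sp r V"
  using assms FS.subspace_0[OF assms(1)]
  unfolding mem_tensor_sp_iff slice_single_slice by (auto simp: single_slice_def)

lemma sum_single_slice:
  fixes G :: "nat \<times> 'a \<Rightarrow> 'k::field"
  assumes "G \<in> tensor_sp r V"
  shows "(\<Sum>i<r. single_slice i (slice G i)) = G"
proof
  fix p :: "nat \<times> 'a"
  obtain l y where p: "p = (l, y)" by (cases p)
  have "(\<Sum>i<r. single_slice i (slice G i)) p = (\<Sum>i<r. if l = i then G (l, y) else 0)"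
    unfolding p by (simp add: sum_fun_apply single_slice_def)
  also have "\<dots> = G p" using assms unfolding p mem_tensor_sp_iff by auto
  finally show "(\<Sum>i<r. single_slice i (slice G i)) p = G p" .
qed

lemma diag_sum_single_slice: "l < r \<Longrightarrow> diag_sum r (single_slice l x) = x (l, ())"
  unfolding diag_sum_def single_slice_def by simp

lemma diag_sum_add: "diag_sum r (G + H) = diag_sum r G + diag_sum r H"
  and diag_sum_diff: "diag_sum r (G - H) = diag_sum r G - diag_sum r H"
  and diag_sum_scale: "diag_sum r (fscale c G) = c * diag_sum r G"
  and diag_sum_sum: "diag_sum r (\<Sum>i\<in>I. Gs i) = (\<Sum>i\<in>I. diag_sum r (Gs i))"
  unfolding diag_sum_def
  by (simp_all add: sum.distrib sum_subtractf sum_distrib_left sum_fun_apply sum.swap[of _ "{..<r}"])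

locale grass_param =
  fixes r d :: nat and v :: "(nat \<Rightarrow> 'k::field) set" and \<alpha> :: "(nat \<Rightarrow> 'k) \<Rightarrow> nat \<Rightarrow> 'k"
  assumes inj_arr: "inj_arr d r \<alpha>" and image_arrsp: "\<alpha> ` arrsp d = v" and one_le_d: "1 \<le> d"
begin

lemma lin_on_alpha: "lin_on (arrsp d) v \<alpha>"
  using inj_arr image_arrsp unfolding inj_arr_def lin_on_def by blast

lemma bij_betw_alpha: "bij_betw \<alpha> (arrsp d) v"
  using inj_arr image_arrsp unfolding inj_arr_def bij_betw_def by blast

lemma v_subset_arrsp: "v \<subseteq> arrsp r"
  using inj_arr image_arrsp lin_on_mem unfolding inj_arr_def by blast

lemma subspace_v: "fsubspace v"
proof (rule FS.subspaceI)
  show "0 \<in> v" using lin_on_zero[OF lin_on_alpha subspace_arrsp] FS.subspace_0[OF subspace_arrsp]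
    image_arrsp by force
next
  fix x y assume "x \<in> v" "y \<in> v"
  then obtain a b where "a \<in> arrsp d" "b \<in> arrsp d" "x = \<alpha> a" "y = \<alpha> b" using image_arrsp by blast
  then show "x + y \<in> v" using lin_on_add[OF lin_on_alpha] lin_on_mem[OF lin_on_alpha]
    FS.subspace_add[OF subspace_arrsp] by metis
next
  fix c x assume "x \<in> v"
  then obtain a where "a \<in> arrsp d" "x = \<alpha> a" using image_arrsp by blast
  then show "fscale c x \<in> v" using lin_on_scale[OF lin_on_alpha] lin_on_mem[OF lin_on_alpha]
    FS.subspace_scale[OF subspace_arrsp] by metis
qed

lemmas subspace_tauC2 = subspace_tauC2[OF subspace_v v_subset_arrsp]
  and subspace_tauC1 = subspace_tauC1[OF subspace_v v_subset_arrsp]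
  and mem_tauC2_iff = mem_tauC2_iff[OF subspace_v v_subset_arrsp]

lemma alpha_gam_mem: "j < d \<Longrightarrow> \<alpha> (gam j) \<in> v"
  using image_arrsp gam_in_arrsp by blast

lemma alpha_eq_lincomb: "c \<in> arrsp d \<Longrightarrow> \<alpha> c = lincomb {..<d} c (\<lambda>j. \<alpha> (gam j))"
  using arrsp_eq_lincomb_gam lin_on_lincomb[OF lin_on_alpha subspace_arrsp] gam_in_arrsp
  by (metis image_subset_iff lessThan_iff)

definition tbasis :: "nat \<Rightarrow> nat \<times> unit \<Rightarrow> 'k" where
  "tbasis j = arr_to_coeffs (\<alpha> (gam j))"

definition tcoord :: "nat \<Rightarrow> (nat \<times> unit \<Rightarrow> 'k) \<Rightarrow> 'k" where
  "tcoord j x = (if x \<in> tauC2 r v then inv_into (arrsp d) \<alpha> (coeffs_to_arr r x) j else 0)"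

lemma tbasis_apply: "tbasis j (i, u) = \<alpha> (gam j) i"
  by (simp add: tbasis_def arr_to_coeffs_def)

lemma coeffs_to_arr_tbasis: "j < d \<Longrightarrow> coeffs_to_arr r (tbasis j) = \<alpha> (gam j)"
  unfolding tbasis_def using alpha_gam_mem v_subset_arrsp by (blast intro: coeffs_to_arr_to_coeffs)

lemma tbasis_mem: "j < d \<Longrightarrow> tbasis j \<in> tauC2 r v"
  unfolding mem_tauC2_iff using alpha_gam_mem v_subset_arrsp
  by (auto simp: coeffs_to_arr_tbasis tbasis_apply arrsp_def)

lemma tcoord_dual: "tcoord j \<in> dual_sp (tauC2 r v)"
proof -
  have inv: "lin_on v (arrsp d) (inv_into (arrsp d) \<alpha>)"
    by (rule lin_on_inv_into[OF lin_on_alpha bij_betw_alpha subspace_arrsp])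
  have c: "coeffs_to_arr r (x + y) = coeffs_to_arr r x + coeffs_to_arr r y"
    "coeffs_to_arr r (fscale c x) = fscale c (coeffs_to_arr r x)" for x y c
    by (simp_all add: coeffs_to_arr_def fun_eq_iff)
  show ?thesis
  proof (rule dual_spI)
    fix x y assume "x \<in> tauC2 r v" "y \<in> tauC2 r v"
    then show "tcoord j (x + y) = tcoord j x + tcoord j y"
      unfolding tcoord_def c using lin_on_add[OF inv] FS.subspace_add[OF subspace_tauC2]
      by (simp add: mem_tauC2_iff)
  next
    fix c x assume "x \<in> tauC2 r v"
    then show "tcoord j (fscale c x) = c * tcoord j x"
      unfolding tcoord_def c using lin_on_scale[OF inv] FS.subspace_scale[OF subspace_tauC2]
      by (simp add: mem_tauC2_iff)
  qed (simp add: tcoord_def)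
qed

lemma tauC2_expand: "x \<in> tauC2 r v \<Longrightarrow> x = (\<Sum>j<d. fscale (tcoord j x) (tbasis j))"
proof -
  assume x: "x \<in> tauC2 r v"
  let ?a = "coeffs_to_arr r x"
  have a: "?a \<in> v" "\<forall>l u. r \<le> l \<longrightarrow> x (l, u) = 0" using x unfolding mem_tauC2_iff by auto
  have c: "inv_into (arrsp d) \<alpha> ?a \<in> arrsp d" "\<alpha> (inv_into (arrsp d) \<alpha> ?a) = ?a"
    using a(1) image_arrsp by (auto simp: inv_into_into f_inv_into_f)
  have "x = arr_to_coeffs (\<alpha> (inv_into (arrsp d) \<alpha> ?a))" using arr_to_coeffs_to_arr[OF a(2)] c(2) by simp
  also have "\<dots> = lincomb {..<d} (inv_into (arrsp d) \<alpha> ?a) tbasis"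
    unfolding alpha_eq_lincomb[OF c(1)] arr_to_coeffs_lincomb tbasis_def ..
  also have "\<dots> = (\<Sum>j<d. fscale (tcoord j x) (tbasis j))"
    unfolding lincomb_def tcoord_def using x by simp
  finally show ?thesis .
qed

lemma tcoord_tbasis: "j' < d \<Longrightarrow> tcoord j (tbasis j') = (if j = j' then 1 else 0)"
  using tbasis_mem[of j'] coeffs_to_arr_tbasis[of j']
    bij_betw_inv_into_left[OF bij_betw_alpha gam_in_arrsp[of j' d]]
  by (simp add: tcoord_def gam_def)

lemma lin_on_dual_tauC2_expand:
  assumes f: "lin_on (dual_sp (tauC2 r v)) W f" and \<phi>: "\<phi> \<in> dual_sp (tauC2 r v)"
  shows "f \<phi> = (\<Sum>j<d. fscale (\<phi> (tbasis j)) (f (tcoord j)))"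
proof -
  have expand: "\<phi> = (\<Sum>j<d. fscale (\<phi> (tbasis j)) (tcoord j))"
  proof
    fix x
    show "\<phi> x = (\<Sum>j<d. fscale (\<phi> (tbasis j)) (tcoord j)) x"
    proof (cases "x \<in> tauC2 r v")
      case True
      have "\<phi> x = \<phi> (\<Sum>j<d. fscale (tcoord j x) (tbasis j))" using tauC2_expand[OF True] by metis
      also have "\<dots> = (\<Sum>j<d. \<phi> (fscale (tcoord j x) (tbasis j)))"
        by (rule dual_sp_sum[OF \<phi> subspace_tauC2]) (simp add: FS.subspace_scale[OF subspace_tauC2] tbasis_mem)
      also have "\<dots> = (\<Sum>j<d. tcoord j x * \<phi> (tbasis j))"
        by (intro sum.cong refl) (simp add: dual_sp_scale[OF \<phi>] tbasis_mem)
      finally show ?thesis by (simp add: sum_fun_apply mult.commute)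
    next
      case False
      then show ?thesis using dual_sp_outside[OF \<phi>] dual_sp_outside[OF tcoord_dual]
        by (simp add: sum_fun_apply)
    qed
  qed
  have "f \<phi> = f (\<Sum>j<d. fscale (\<phi> (tbasis j)) (tcoord j))" using expand by (rule arg_cong)
  also have "\<dots> = (\<Sum>j<d. f (fscale (\<phi> (tbasis j)) (tcoord j)))"
    by (rule lin_on_sum[OF f subspace_dual_sp]) (simp add: FS.subspace_scale[OF subspace_dual_sp] tcoord_dual)
  also have "\<dots> = (\<Sum>j<d. fscale (\<phi> (tbasis j)) (f (tcoord j)))"
    by (simp add: lin_on_scale[OF f tcoord_dual])
  finally show ?thesis .
qed

lemma exists_diag_unit: "\<exists>W. W \<in> tensor_sp r (tauC2 r v) \<and> diag_sum r W = 1"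
proof -
  have g0: "gam 0 \<in> arrsp d" using one_le_d by (intro gam_in_arrsp) simp
  have "gam 0 \<noteq> (0 :: nat \<Rightarrow> 'k)" by (simp add: gam_def fun_eq_iff)
  moreover have "inj_on \<alpha> (arrsp d)" using inj_arr unfolding inj_arr_def by blast
  ultimately have "\<alpha> (gam 0) \<noteq> \<alpha> 0" using g0 FS.subspace_0[OF subspace_arrsp] by (blast dest: inj_onD)
  then have "\<alpha> (gam 0) \<noteq> 0" using lin_on_zero[OF lin_on_alpha subspace_arrsp] by simp
  then obtain l where l: "\<alpha> (gam 0) l \<noteq> 0" by (auto simp: fun_eq_iff)
  moreover have "\<alpha> (gam 0) \<in> arrsp r" using alpha_gam_mem one_le_d v_subset_arrsp by auto
  ultimately have "l < r" unfolding arrsp_def by (auto simp: not_less[symmetric])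
  define w where "w = fscale (1 / \<alpha> (gam 0) l) (tbasis 0)"
  have "w \<in> tauC2 r v" unfolding w_def using tbasis_mem one_le_d FS.subspace_scale[OF subspace_tauC2] by simp
  then have "single_slice l w \<in> tensor_sp r (tauC2 r v)" by (rule single_slice_mem[OF subspace_tauC2 \<open>l < r\<close>])
  moreover have "diag_sum r (single_slice l w) = w (l, ())" by (rule diag_sum_single_slice[OF \<open>l < r\<close>])
  moreover have "w (l, ()) = 1" using l by (simp add: w_def tbasis_apply)
  ultimately show ?thesis by (intro exI[of _ "single_slice l w"]) simp
qed

definition diag_unit :: "nat \<times> (nat \<times> unit) \<Rightarrow> 'k" where
  "diag_unit = (SOME W. W \<in> tensor_sp r (tauC2 r v) \<and> diag_sum r W = 1)"

definition diag_proj :: "(nat \<times> (nat \<times> unit) \<Rightarrow> 'k) \<Rightarrow> nat \<times> (nat \<times> unit) \<Rightarrow> 'k" where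
  "diag_proj G = G - fscale (diag_sum r G) diag_unit"

lemma diag_unit: "diag_unit \<in> tensor_sp r (tauC2 r v)" "diag_sum r diag_unit = 1"
  using someI_ex[OF exists_diag_unit] unfolding diag_unit_def by blast+

lemma diag_proj_mem:
  assumes "G \<in> tensor_sp r (tauC2 r v)"
  shows "diag_proj G \<in> tauC1 r v"
proof -
  note T = subspace_tensor_sp[OF subspace_tauC2]
  have "diag_proj G \<in> tensor_sp r (tauC2 r v)"
    unfolding diag_proj_def using assms diag_unit(1) FS.subspace_diff[OF T] FS.subspace_scale[OF T] by blast
  moreover have "diag_sum r (diag_proj G) = 0"
    unfolding diag_proj_def diag_sum_diff diag_sum_scale using diag_unit(2) by simp
  ultimately show ?thesis unfolding tauC1_eq by blast
qed

lemma diag_proj_id: "G \<in> tauC1 r v \<Longrightarrow> diag_proj G = G"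
  unfolding diag_proj_def tauC1_eq by simp

lemma diag_proj_sum: "diag_proj (\<Sum>i\<in>I. Gs i) = (\<Sum>i\<in>I. diag_proj (Gs i))"
  and diag_proj_add: "diag_proj (G + H) = diag_proj G + diag_proj H"
  and diag_proj_scale: "diag_proj (fscale c G) = fscale c (diag_proj G)"
  unfolding diag_proj_def diag_sum_sum diag_sum_add diag_sum_scale
  by (simp_all add: sum_subtractf FS.scale_sum_left FS.scale_left_distrib FS.scale_right_diff_distrib)

lemma slice_diag_proj: "slice (diag_proj G) i = slice G i - fscale (diag_sum r G) (slice diag_unit i)"
  unfolding diag_proj_def by (simp add: fun_eq_iff)

lemma slice_tauC1_mem: "F \<in> tauC1 r v \<Longrightarrow> i < r \<Longrightarrow> slice F i \<in> tauC2 r v"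
  unfolding tauC1_eq mem_tensor_sp_iff by blast

lemma arr_Erep_mem:
  assumes "\<phi> \<in> dual_sp (tauC2 r v)" "i < r"
  shows "arr (Erep r v) i \<phi> \<in> dual_sp (tauC1 r v)"
  unfolding Erep_simps
proof (rule dual_spI)
  fix x y assume "x \<in> tauC1 r v" "y \<in> tauC1 r v"
  then show "(if x + y \<in> tauC1 r v then \<phi> (slice (x + y) i) else 0) =
      (if x \<in> tauC1 r v then \<phi> (slice x i) else 0) + (if y \<in> tauC1 r v then \<phi> (slice y i) else 0)"
    using FS.subspace_add[OF subspace_tauC1] dual_sp_add[OF assms(1)] slice_tauC1_mem[OF _ assms(2)]
    by (simp add: plus_fun_def)
next
  fix c x assume "x \<in> tauC1 r v"
  then show "(if fscale c x \<in> tauC1 r v then \<phi> (slice (fscale c x) i) else 0) =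
      c * (if x \<in> tauC1 r v then \<phi> (slice x i) else 0)"
    using FS.subspace_scale[OF subspace_tauC1] dual_sp_scale[OF assms(1)] slice_tauC1_mem[OF _ assms(2)]
    by (simp add: fscale_def)
qed simp

text \<open>The arrows of \<open>E(v)\<close> jointly map onto \<open>E(v)\<^sub>2\<close>: a functional on \<open>tauC1 r v\<close> extends,
  via \<open>diag_proj\<close>, to \<open>(tauC2 r v)\<^sup>r\<close>, and its restrictions to the slices give the preimages.\<close>

lemma Erep_arr_decomp:
  assumes \<Phi>: "\<Phi> \<in> dual_sp (tauC1 r v)"
  obtains \<psi> where "\<And>i. i < r \<Longrightarrow> \<psi> i \<in> dual_sp (tauC2 r v)" "\<Phi> = (\<Sum>i<r. arr (Erep r v) i (\<psi> i))"
proof -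
  define \<psi> where "\<psi> i x = (if x \<in> tauC2 r v then \<Phi> (diag_proj (single_slice i x)) else 0)" for i x
  have P: "diag_proj (single_slice i x) \<in> tauC1 r v" if "i < r" "x \<in> tauC2 r v" for i x
    using diag_proj_mem single_slice_mem[OF subspace_tauC2] that by blast
  have "\<psi> i \<in> dual_sp (tauC2 r v)" if i: "i < r" for i
  proof (rule dual_spI)
    fix x y assume "x \<in> tauC2 r v" "y \<in> tauC2 r v"
    then show "\<psi> i (x + y) = \<psi> i x + \<psi> i y"
      unfolding \<psi>_def single_slice_add diag_proj_add
      using FS.subspace_add[OF subspace_tauC2] dual_sp_add[OF \<Phi> P[OF i] P[OF i]] by simp
  next
    fix c x assume "x \<in> tauC2 r v"
    then show "\<psi> i (fscale c x) = c * \<psi> i x"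
      unfolding \<psi>_def single_slice_scale diag_proj_scale
      using FS.subspace_scale[OF subspace_tauC2] dual_sp_scale[OF \<Phi> P[OF i]] by simp
  qed (simp add: \<psi>_def)
  moreover have "\<Phi> = (\<Sum>i<r. arr (Erep r v) i (\<psi> i))"
  proof
    fix F
    show "\<Phi> F = (\<Sum>i<r. arr (Erep r v) i (\<psi> i)) F"
    proof (cases "F \<in> tauC1 r v")
      case True
      have FT: "F \<in> tensor_sp r (tauC2 r v)" using True unfolding tauC1_eq by blast
      have "(\<Sum>i<r. arr (Erep r v) i (\<psi> i)) F = (\<Sum>i<r. \<Phi> (diag_proj (single_slice i (slice F i))))"
        using True slice_tauC1_mem[OF True] by (simp add: sum_fun_apply Erep_simps \<psi>_def)
      also have "\<dots> = \<Phi> (diag_proj (\<Sum>i<r. single_slice i (slice F i)))"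
        unfolding diag_proj_sum using P slice_tauC1_mem[OF True]
        by (intro dual_sp_sum[OF \<Phi> subspace_tauC1, symmetric]) simp
      also have "\<dots> = \<Phi> F" unfolding sum_single_slice[OF FT] diag_proj_id[OF True] ..
      finally show ?thesis by simp
    next
      case False
      then show ?thesis using dual_sp_outside[OF \<Phi>] by (simp add: sum_fun_apply Erep_simps)
    qed
  qed
  ultimately show ?thesis using that by blast
qed

lemma hom_from_Erep_sp2_zero:
  assumes f: "is_hom r (Erep r v) M f1 f2" and M: "is_rep r M"
    and f1: "\<And>\<phi>. \<phi> \<in> sp1 (Erep r v) \<Longrightarrow> f1 \<phi> = 0" and \<Phi>: "\<Phi> \<in> sp2 (Erep r v)"
  shows "f2 \<Phi> = 0"
proof -
  note f' = is_homD[OF f] and M' = is_repD[OF M]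
  obtain \<psi> where \<psi>: "\<And>i. i < r \<Longrightarrow> \<psi> i \<in> dual_sp (tauC2 r v)" "\<Phi> = (\<Sum>i<r. arr (Erep r v) i (\<psi> i))"
    using Erep_arr_decomp \<Phi> unfolding Erep_simps by blast
  have "f2 \<Phi> = (\<Sum>i<r. f2 (arr (Erep r v) i (\<psi> i)))"
    unfolding \<psi>(2) using f'(2) arr_Erep_mem \<psi>(1)
    by (intro lin_on_sum[OF f'(2)]) (simp_all add: Erep_simps subspace_dual_sp)
  also have "\<dots> = (\<Sum>i<r. arr M i 0)"
    using f'(3) f1 \<psi>(1) by (intro sum.cong refl) (simp add: Erep_simps)
  also have "\<dots> = 0" using lin_on_zero[OF M'(3) M'(1)] by simp
  finally show ?thesis .
qed

definition tauC2_eval :: "nat \<Rightarrow> (nat \<times> unit \<Rightarrow> 'k) \<Rightarrow> 'k" where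
  "tauC2_eval i x = (if x \<in> tauC2 r v then x (i, ()) else 0)"

lemma tauC2_eval_dual: "tauC2_eval i \<in> dual_sp (tauC2 r v)"
  by (rule dual_spI) (auto simp: tauC2_eval_def FS.subspace_add[OF subspace_tauC2] FS.subspace_scale[OF subspace_tauC2])

lemma tauC2_eval_tbasis: "j < d \<Longrightarrow> tauC2_eval i (tbasis j) = \<alpha> (gam j) i"
  by (simp add: tauC2_eval_def tbasis_mem tbasis_apply)

text \<open>The vanishing of \<open>diag_sum\<close> on \<open>tauC1 r v\<close>, read in \<open>E(v)\<close>.\<close>

lemma sum_arr_Erep_eval: "(\<Sum>i<r. arr (Erep r v) i (tauC2_eval i)) = 0"
proof
  fix F
  show "(\<Sum>i<r. arr (Erep r v) i (tauC2_eval i)) F = 0 F"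
  proof (cases "F \<in> tauC1 r v")
    case True
    then have "(\<Sum>i<r. arr (Erep r v) i (tauC2_eval i)) F = diag_sum r F"
      using slice_tauC1_mem[OF True] by (simp add: sum_fun_apply Erep_simps tauC2_eval_def diag_sum_def)
    then show ?thesis using True unfolding tauC1_eq by simp
  qed (simp add: sum_fun_apply Erep_simps)
qed

lemma hom_zero_Erep_if_psi_injective:
  assumes M: "is_rep r M" and inj: "psi_injective d (pullback r \<alpha> M)"
  shows "hom_zero r (Erep r v) M"
  unfolding hom_zero_def
proof (intro allI impI)
  fix f1 f2 assume f: "is_hom r (Erep r v) M f1 f2"
  note f' = is_homD(1,2)[OF f, unfolded Erep_simps] is_homD(3)[OF f, unfolded Erep_simps(1)]
    and M' = is_repD[OF M]
  define t where "t = (\<lambda>(j, y). if j < d then f1 (tcoord j) y else 0)"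
  have st: "slice t j = f1 (tcoord j)" if "j < d" for j using that by (simp add: t_def)
  have t: "t \<in> tensor_sp d (sp1 M)"
    unfolding mem_tensor_sp_iff using st lin_on_mem[OF f'(1) tcoord_dual] by (simp add: t_def)
  have f1_eval: "f1 (tauC2_eval l) = (\<Sum>j<d. fscale (\<alpha> (gam j) l) (slice t j))" for l
    using lin_on_dual_tauC2_expand[OF f'(1) tauC2_eval_dual] by (simp add: tauC2_eval_tbasis st)
  have "psi d (pullback r \<alpha> M) t = (\<Sum>l<r. \<Sum>j<d. fscale (\<alpha> (gam j) l) (arr M l (slice t j)))"
    unfolding psi_pullback by (rule sum.swap)
  also have "\<dots> = (\<Sum>l<r. arr M l (f1 (tauC2_eval l)))"
  proof (intro sum.cong refl)
    fix l assume "l \<in> {..<r}"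
    then have l: "lin_on (sp1 M) (sp2 M) (arr M l)" using M'(3) by simp
    have tj: "slice t j \<in> sp1 M" if "j < d" for j using t that unfolding mem_tensor_sp_iff by blast
    have "arr M l (f1 (tauC2_eval l)) = (\<Sum>j<d. arr M l (fscale (\<alpha> (gam j) l) (slice t j)))"
      unfolding f1_eval by (rule lin_on_sum[OF l M'(1)]) (simp add: FS.subspace_scale[OF M'(1)] tj)
    also have "\<dots> = (\<Sum>j<d. fscale (\<alpha> (gam j) l) (arr M l (slice t j)))"
      by (intro sum.cong refl) (simp add: lin_on_scale[OF l] tj)
    finally show "(\<Sum>j<d. fscale (\<alpha> (gam j) l) (arr M l (slice t j))) = arr M l (f1 (tauC2_eval l))"
      by simp
  qed
  also have "\<dots> = (\<Sum>l<r. f2 (arr (Erep r v) l (tauC2_eval l)))"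
    using f'(3) tauC2_eval_dual by simp
  also have "\<dots> = f2 (\<Sum>l<r. arr (Erep r v) l (tauC2_eval l))"
    by (rule lin_on_sum[OF f'(2) subspace_dual_sp, symmetric]) (simp add: arr_Erep_mem tauC2_eval_dual)
  also have "\<dots> = 0" unfolding sum_arr_Erep_eval by (rule lin_on_zero[OF f'(2) subspace_dual_sp])
  finally have "t = 0" using inj t is_rep_pullback[OF M] psi_injective_iff by (metis pullback_simps(1))
  then have "f1 (tcoord j) = 0" if "j < d" for j using st[OF that] by (simp add: fun_eq_iff)
  then have f1: "f1 \<phi> = 0" if "\<phi> \<in> sp1 (Erep r v)" for \<phi>
    using that lin_on_dual_tauC2_expand[OF f'(1)] by (simp add: Erep_simps)
  then show "(\<forall>x\<in>sp1 (Erep r v). f1 x = 0) \<and> (\<forall>y\<in>sp2 (Erep r v). f2 y = 0)"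
    using hom_from_Erep_sp2_zero[OF f M] by blast
qed

lemma arr_Erep_diag_proj:
  assumes \<phi>: "\<phi> \<in> dual_sp (tauC2 r v)" and i: "i < r" and l: "l < r" and j: "j < d"
  shows "arr (Erep r v) i \<phi> (diag_proj (single_slice l (tbasis j)))
     = (if i = l then \<phi> (tbasis j) else 0) - \<alpha> (gam j) l * \<phi> (slice diag_unit i)"
proof -
  let ?G = "single_slice l (tbasis j)"
  have b: "tbasis j \<in> tauC2 r v" by (rule tbasis_mem[OF j])
  have u: "slice diag_unit i \<in> tauC2 r v" using diag_unit(1) i unfolding mem_tensor_sp_iff by blast
  have "diag_proj ?G \<in> tauC1 r v" by (rule diag_proj_mem[OF single_slice_mem[OF subspace_tauC2 l b]])
  then have "arr (Erep r v) i \<phi> (diag_proj ?G) = \<phi> (slice (diag_proj ?G) i)"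
    by (simp add: Erep_simps)
  also have "slice (diag_proj ?G) i = (if i = l then tbasis j else 0) - fscale (\<alpha> (gam j) l) (slice diag_unit i)"
    unfolding slice_diag_proj slice_single_slice diag_sum_single_slice[OF l] tbasis_apply ..
  also have "\<phi> \<dots> = \<phi> (if i = l then tbasis j else 0) - \<phi> (fscale (\<alpha> (gam j) l) (slice diag_unit i))"
    using b u FS.subspace_0[OF subspace_tauC2] FS.subspace_scale[OF subspace_tauC2]
    by (intro dual_sp_diff[OF \<phi> subspace_tauC2]) simp_all
  also have "\<dots> = (if i = l then \<phi> (tbasis j) else 0) - \<alpha> (gam j) l * \<phi> (slice diag_unit i)"
    using dual_sp_scale[OF \<phi> u] dual_sp_zero[OF \<phi> subspace_tauC2] by simp
  finally show ?thesis .
qed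

text \<open>In the morphism built from \<open>t\<close> below, the correction term of \<open>diag_proj\<close> contributes a
  multiple of \<open>\<psi>\<^bsub>\<alpha>\<^sup>*(M)\<^esub>(t) = 0\<close>; this is why \<open>f\<^sub>1\<close>, \<open>f\<^sub>2\<close> commute with the arrows.\<close>

lemma not_hom_zero_Erep_if_psi_kernel:
  assumes M: "is_rep r M"
    and t: "t \<in> tensor_sp d (sp1 M)" "t \<noteq> 0" "psi d (pullback r \<alpha> M) t = 0"
  shows "\<not> hom_zero r (Erep r v) M"
proof -
  note M' = is_repD[OF M]
  have tj: "slice t j \<in> sp1 M" if "j < d" for j using t(1) that unfolding mem_tensor_sp_iff by blast
  then have t_img: "(\<lambda>j. slice t j) ` {..<d} \<subseteq> sp1 M" by blast
  let ?Q = "{..<r} \<times> {..<d}"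
  define f1 where "f1 \<phi> = (\<Sum>j<d. fscale (\<phi> (tbasis j)) (slice t j))" for \<phi> :: "(nat \<times> unit \<Rightarrow> 'k) \<Rightarrow> 'k"
  define f2 where "f2 \<Phi> = (\<Sum>(l, j)\<in>?Q. fscale (\<Phi> (diag_proj (single_slice l (tbasis j))))
      (arr M l (slice t j)))" for \<Phi> :: "(nat \<times> (nat \<times> unit) \<Rightarrow> 'k) \<Rightarrow> 'k"
  have lin1: "lin_on (dual_sp (tauC2 r v)) (sp1 M) f1"
    unfolding f1_def by (rule lin_on_eval_sum[OF _ M'(1)]) (simp_all add: tj)
  have lin2: "lin_on (dual_sp (tauC1 r v)) (sp2 M) f2"
    unfolding f2_def split_def
    by (rule lin_on_eval_sum[OF _ M'(2)]) (auto intro!: lin_on_mem[OF M'(3)] tj)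
  have "f2 (arr (Erep r v) i \<phi>) = arr M i (f1 \<phi>)" if i: "i < r" and \<phi>: "\<phi> \<in> dual_sp (tauC2 r v)" for i \<phi>
  proof -
    have "f2 (arr (Erep r v) i \<phi>) = (\<Sum>(l, j)\<in>?Q. fscale ((if i = l then \<phi> (tbasis j) else 0)
        - \<alpha> (gam j) l * \<phi> (slice diag_unit i)) (arr M l (slice t j)))"
      unfolding f2_def by (intro sum.cong refl) (auto simp: arr_Erep_diag_proj[OF \<phi> i])
    also have "\<dots> = (\<Sum>(l, j)\<in>?Q. fscale (if i = l then \<phi> (tbasis j) else 0) (arr M l (slice t j)))
        - fscale (\<phi> (slice diag_unit i)) (\<Sum>(l, j)\<in>?Q. fscale (\<alpha> (gam j) l) (arr M l (slice t j)))"
      by (simp add: split_def FS.scale_left_diff_distrib sum_subtractf FS.scale_sum_right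
          mult.commute)
    also have "(\<Sum>(l, j)\<in>?Q. fscale (\<alpha> (gam j) l) (arr M l (slice t j))) = psi d (pullback r \<alpha> M) t"
      unfolding psi_pullback sum.cartesian_product[symmetric] by (rule sum.swap)
    also have "(\<Sum>(l, j)\<in>?Q. fscale (if i = l then \<phi> (tbasis j) else 0) (arr M l (slice t j)))
        = (\<Sum>l<r. if i = l then (\<Sum>j<d. fscale (\<phi> (tbasis j)) (arr M l (slice t j))) else 0)"
      unfolding sum.cartesian_product[symmetric] by (intro sum.cong refl) auto
    also have "\<dots> = (\<Sum>j<d. fscale (\<phi> (tbasis j)) (arr M i (slice t j)))" using i by simp
    also have "\<dots> = arr M i (f1 \<phi>)"
      using lin_on_lincomb[OF M'(3)[OF i] M'(1) t_img, of "\<lambda>j. \<phi> (tbasis j)"]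
      unfolding f1_def lincomb_def by simp
    finally show ?thesis using t(3) by simp
  qed
  then have hom: "is_hom r (Erep r v) M f1 f2"
    unfolding is_hom_def Erep_simps using lin1 lin2 by simp
  obtain j0 x0 where "t (j0, x0) \<noteq> 0" using t(2) by (auto simp: fun_eq_iff)
  moreover from this have j0: "j0 < d" using t(1) unfolding mem_tensor_sp_iff by (meson not_less)
  moreover have "f1 (tcoord j0) = (\<Sum>j<d. if j0 = j then slice t j else 0)"
    unfolding f1_def by (intro sum.cong refl) (simp add: tcoord_tbasis)
  moreover have "\<dots> = slice t j0" using j0 by simp
  ultimately have "f1 (tcoord j0) \<noteq> 0" by (auto simp: fun_eq_iff)
  then show ?thesis using hom tcoord_dual unfolding hom_zero_def Erep_simps by blast
qed

lemma hom_zero_Erep_iff_psi_injective: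
  assumes "is_rep r M"
  shows "hom_zero r (Erep r v) M \<longleftrightarrow> psi_injective d (pullback r \<alpha> M)"
  using hom_zero_Erep_if_psi_injective[OF assms] not_hom_zero_Erep_if_psi_kernel[OF assms]
  unfolding psi_injective_iff[OF is_rep_pullback[OF assms]] by auto

end

theorem theorem2p1p5:
  fixes M :: "('i, 'j, 'k::field) krep"
    and v :: "(nat \<Rightarrow> 'k) set"
    and r d :: nat
  assumes "alg_closed TYPE('k)"
    and "2 \<le> r" and "1 \<le> d" and "d \<le> r - 1"
    and "is_rep r M"
    and "v \<in> Gr d r"
  defines "S1 \<equiv> hom_zero r (Erep r v) M"
    and "S2 \<equiv> (\<forall>\<alpha>. inj_arr d r \<alpha> \<and> \<alpha> ` arrsp d = v \<longrightarrow> psi_injective d (pullback r \<alpha> M))"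
    and "S3 \<equiv> (\<exists>\<alpha>. inj_arr d r \<alpha> \<and> \<alpha> ` arrsp d = v \<and> psi_injective d (pullback r \<alpha> M))"
    and "S4 \<equiv> (\<exists>\<alpha>. inj_arr d r \<alpha> \<and> \<alpha> ` arrsp d = v \<and>
               (\<exists>a::nat. int a = Delta M d \<and>
                  is_iso d (pullback r \<alpha> M) (dsum (mult_rep a P0) (mult_rep (fdim (sp1 M)) (P1 d)))))"
    and "S5 \<equiv> v \<notin> rank_variety r d M"
  shows "(S1 \<longleftrightarrow> S2) \<and> (S2 \<longleftrightarrow> S3) \<and> (S3 \<longleftrightarrow> S4) \<and> (S4 \<longleftrightarrow> S5)"
proof -
  have M: "is_rep r M" and v: "v \<in> Gr d r" by fact+
  have pullback: "is_rep d (pullback r \<alpha> M)" "Delta (pullback r \<alpha> M) d = Delta M d" for \<alpha>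
    using is_rep_pullback[OF M] by (simp_all add: Delta_def)
  have S1: "psi_injective d (pullback r \<alpha> M) \<longleftrightarrow> S1" if "inj_arr d r \<alpha>" "\<alpha> ` arrsp d = v" for \<alpha>
  proof -
    have "grass_param r d v \<alpha>" using that \<open>1 \<le> d\<close> by unfold_locales
    then show ?thesis unfolding S1_def by (rule grass_param.hom_zero_Erep_iff_psi_injective[OF _ M, symmetric])
  qed
  obtain \<alpha>0 where \<alpha>0: "inj_arr d r \<alpha>0" "\<alpha>0 ` arrsp d = v" by (rule inj_arr_exists[OF v])
  have "S1 \<longleftrightarrow> S2" "S2 \<longleftrightarrow> S3" unfolding S2_def S3_def using \<alpha>0 by (auto simp: S1)
  moreover have "S3 \<longleftrightarrow> S4"
    unfolding S3_def S4_def using psi_injective_iff_iso_std_proj[OF pullback(1)] pullback(2) by simp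
  moreover have "S2 \<longleftrightarrow> S5"
    unfolding S2_def S5_def rank_variety_def
    using v projective_rep_iff_psi_injective[OF pullback(1)] by blast
  ultimately show ?thesis by blast
qed

end
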